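(* For every positive integer $n$, the class $\mathcal K_n^*$ has the Ramsey property.
   Context: For relational structures $\mathbf A,\mathbf B$ in the same language, $\binom{\mathbf B}{\mathbf A}$ denotes the set of substructures of $\mathbf B$ isomorphic to $\mathbf A$. For $k\ge 1$, $\mathbf C\to(\mathbf B)^{\mathbf A}_k$ means: for every map $c:\binom{\mathbf C}{\mathbf A}\to[k]=\{0,\dots,k-1\}$ there is $\mathbf B'\in\binom{\mathbf C}{\mathbf B}$ such that $c$ is constant on $\binom{\mathbf B'}{\mathbf A}$. A class $\mathcal K$ of finite structures has the Ramsey property if for all $k\ge1$ and all $\mathbf A,\mathbf B\in\mathcal K$ there is $\mathbf C\in\mathcal K$ with $\mathbf C\to(\mathbf B)^{\mathbf A}_k$. A directed graph $(A,E)$ ($E$ irreflexive and asymmetric) is complete multipartite if the relation "$u=v$, or neither $E(u,v)$ nor $E(v,u)$" is an equivalence relation on $A$; its classes are called the parts (so any two vertices in different parts are joined by exactly one directed edge, and there are no edges inside a part). $\mathcal K_n^*$ is the class of finite structures $(A,E,P_0,\dots,P_{n-1},<)$ such that $(A,E)$ is a complete multipartite directed graph with at most $n$ parts, $P_0,\dots,P_{n-1}$ are pairwise disjoint subsets of $A$ each of which is either empty or a part, every part equals some $P_i$, and $<$ is a linear order on $A$ such that every element of $P_i$ is below every element of $P_j$ whenever $i<j$. (This is the age of the expansion $n*I_\omega^*$ of the generic complete $n$-partite directed graph by unary predicates naming the parts and a convex linear order.) *)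

theory Defs
  imports Main
begin

text \<open>Carriers are finite
subsets of nat (every finite structure is isomorphic to such a one, and all notions
below are isomorphism invariant). All relations are only ever inspected on the carrier.\<close>

record struc =
  univ :: "nat set"
  edge :: "nat \<Rightarrow> nat \<Rightarrow> bool"
  pred :: "nat \<Rightarrow> nat set"
  less :: "nat \<Rightarrow> nat \<Rightarrow> bool"

definition induced :: "struc \<Rightarrow> nat set \<Rightarrow> struc" where
  "induced B S = B\<lparr>univ := S, pred := (\<lambda>i. pred B i \<inter> S)\<rparr>"

definition is_iso :: "nat \<Rightarrow> struc \<Rightarrow> struc \<Rightarrow> (nat \<Rightarrow> nat) \<Rightarrow> bool" where
  "is_iso n A B f \<longleftrightarrow> bij_betw f (univ A) (univ B) \<and>
     (\<forall>x\<in>univ A. \<forall>y\<in>univ A. edge A x y \<longleftrightarrow> edge B (f x) (f y)) \<and>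
     (\<forall>x\<in>univ A. \<forall>y\<in>univ A. less A x y \<longleftrightarrow> less B (f x) (f y)) \<and>
     (\<forall>i<n. \<forall>x\<in>univ A. x \<in> pred A i \<longleftrightarrow> f x \<in> pred B i)"

definition isomorphic :: "nat \<Rightarrow> struc \<Rightarrow> struc \<Rightarrow> bool" where
  "isomorphic n A B \<longleftrightarrow> (\<exists>f. is_iso n A B f)"

text \<open>binom C A: the substructures of C isomorphic to A, represented by their
underlying sets (a substructure is determined by its underlying set).\<close>
definition binom :: "nat \<Rightarrow> struc \<Rightarrow> struc \<Rightarrow> nat set set" where
  "binom n C A = {S. S \<subseteq> univ C \<and> isomorphic n A (induced C S)}"

definition arrows :: "nat \<Rightarrow> struc \<Rightarrow> struc \<Rightarrow> struc \<Rightarrow> nat \<Rightarrow> bool" where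
  "arrows n C B A k \<longleftrightarrow>
     (\<forall>c :: nat set \<Rightarrow> nat. (\<forall>S\<in>binom n C A. c S < k) \<longrightarrow>
        (\<exists>B'\<in>binom n C B. \<exists>j. \<forall>S\<in>binom n (induced C B') A. c S = j))"

definition ramsey_property :: "nat \<Rightarrow> struc set \<Rightarrow> bool" where
  "ramsey_property n K \<longleftrightarrow>
     (\<forall>k\<ge>1. \<forall>A\<in>K. \<forall>B\<in>K. \<exists>C\<in>K. arrows n C B A k)"

definition part_of :: "struc \<Rightarrow> nat \<Rightarrow> nat set" where
  "part_of A x = {y\<in>univ A. x = y \<or> (\<not> edge A x y \<and> \<not> edge A y x)}"

definition complete_multipartite :: "struc \<Rightarrow> bool" where
  "complete_multipartite A \<longleftrightarrow>
     (\<forall>x\<in>univ A. \<not> edge A x x) \<and>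
     (\<forall>x\<in>univ A. \<forall>y\<in>univ A. edge A x y \<longrightarrow> \<not> edge A y x) \<and>
     (\<forall>x\<in>univ A. \<forall>y\<in>univ A. \<forall>z\<in>univ A.
        (x = y \<or> (\<not> edge A x y \<and> \<not> edge A y x)) \<longrightarrow>
        (y = z \<or> (\<not> edge A y z \<and> \<not> edge A z y)) \<longrightarrow>
        (x = z \<or> (\<not> edge A x z \<and> \<not> edge A z x)))"

definition Kstar :: "nat \<Rightarrow> struc set" where
  "Kstar n = {A. finite (univ A) \<and> complete_multipartite A \<and>
     (\<forall>i<n. pred A i \<subseteq> univ A) \<and>
     (\<forall>i<n. \<forall>j<n. i \<noteq> j \<longrightarrow> pred A i \<inter> pred A j = {}) \<and>
     (\<forall>i<n. pred A i = {} \<or> (\<exists>x\<in>univ A. pred A i = part_of A x)) \<and>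
     (\<forall>x\<in>univ A. \<exists>i<n. part_of A x = pred A i) \<and>
     (\<forall>x\<in>univ A. \<not> less A x x) \<and>
     (\<forall>x\<in>univ A. \<forall>y\<in>univ A. \<forall>z\<in>univ A. less A x y \<longrightarrow> less A y z \<longrightarrow> less A x z) \<and>
     (\<forall>x\<in>univ A. \<forall>y\<in>univ A. x = y \<or> less A x y \<or> less A y x) \<and>
     (\<forall>i<n. \<forall>j<n. i < j \<longrightarrow> (\<forall>x\<in>pred A i. \<forall>y\<in>pred A j. less A x y))}"

end

theory Submission
  imports Defs "HOL-Library.Countable_Set" "HOL-Library.FuncSet" "HOL-Library.Product_Lexorder"
    "HOL-Library.Ramsey"
begin

text \<open>The partite construction of Nesetril and Rodl. Choose \<open>M\<close> with
  \<open>M \<rightarrow> (b)\<^sup>a\<^sub>k\<close> by Ramsey's theorem, where \<open>a\<close> and \<open>b\<close> are the sizes of \<open>A\<close> and \<open>B\<close>, and start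
  from the partite structure made of one copy of \<open>B\<close> on every \<open>b\<close>-set of columns in
  \<open>{..<M}\<close>. For an \<open>a\<close>-set \<open>S\<close> of columns, the copies of \<open>A\<close> on the columns \<open>S\<close> are the
  copies of a pattern. The partite lemma, a consequence of the Hales--Jewett theorem,
  provides a partite structure that is Ramsey for the copies of one pattern in a structure
  lying over it; amalgamating copies of an arbitrary partite structure along it, and
  iterating over all patterns, gives a partite structure \<open>P\<close> in which every \<open>k\<close>-colouring
  of the copies of \<open>A\<close> depends, on some embedded copy of the starting structure, only on the
  column set. Ramsey's theorem then yields a \<open>b\<close>-set of columns whose copy of \<open>B\<close> is
  monochromatic, and \<open>P\<close>, ordered lexicographically by part, column and vertex, lies in
  \<open>Kstar n\<close>.\<close>

section \<open>The Hales--Jewett theorem\<close>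

definition words :: "nat \<Rightarrow> nat \<Rightarrow> nat list set" where
  "words m N = {w. length w = N \<and> set w \<subseteq> {..<m}}"

definition is_comb_line :: "nat \<Rightarrow> nat \<Rightarrow> nat option list \<Rightarrow> bool" where
  "is_comb_line m N L \<longleftrightarrow> length L = N \<and> None \<in> set L \<and> (\<forall>a. Some a \<in> set L \<longrightarrow> a < m)"

definition line_point :: "nat option list \<Rightarrow> nat \<Rightarrow> nat list" where
  "line_point L j = map (case_option j id) L"

definition constant_on_line :: "(nat list \<Rightarrow> 'c) \<Rightarrow> nat \<Rightarrow> nat option list \<Rightarrow> bool" where
  "constant_on_line \<chi> m L \<longleftrightarrow> (\<forall>i<m. \<chi> (line_point L i) = \<chi> (line_point L 0))"

definition hales_jewett :: "nat \<Rightarrow> nat \<Rightarrow> nat \<Rightarrow> bool" where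
  "hales_jewett m k N \<longleftrightarrow> (\<forall>\<chi>::nat list \<Rightarrow> nat. card (\<chi> ` words m N) \<le> k \<longrightarrow>
      (\<exists>L. is_comb_line m N L \<and> constant_on_line \<chi> m L))"

lemma finite_words: "finite (words m N)"
proof -
  have "words m N = {w. set w \<subseteq> {..<m} \<and> length w = N}" by (auto simp: words_def)
  then show ?thesis using finite_lists_length_eq[of "{..<m}" N] by simp
qed

lemma line_point_append [simp]: "line_point (L @ L') j = line_point L j @ line_point L' j"
  by (simp add: line_point_def)

lemma line_point_map_Some [simp]: "line_point (map Some w) j = w"
  by (induct w) (auto simp: line_point_def)

lemma line_point_in_words: "is_comb_line m N L \<Longrightarrow> j < m \<Longrightarrow> line_point L j \<in> words m N"
  by (auto simp: words_def is_comb_line_def line_point_def split: option.splits)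

lemma append_in_words: "u \<in> words m N \<Longrightarrow> v \<in> words m N' \<Longrightarrow> u @ v \<in> words m (N + N')"
  by (auto simp: words_def)

lemma words_mono: "v \<in> words m' N \<Longrightarrow> m' \<le> m \<Longrightarrow> v \<in> words m N"
  by (auto simp: words_def)

lemma is_comb_line_append:
  "is_comb_line m N L \<Longrightarrow> is_comb_line m N' L' \<Longrightarrow> is_comb_line m (N + N') (L @ L')"
  by (auto simp: is_comb_line_def)

lemma is_comb_line_append_word:
  "is_comb_line m N L \<Longrightarrow> w \<in> words m N' \<Longrightarrow> is_comb_line m (N + N') (L @ map Some w)"
  by (auto simp: is_comb_line_def words_def)

lemma is_comb_line_word_append:
  "is_comb_line m N' L \<Longrightarrow> w \<in> words m N \<Longrightarrow> is_comb_line m (N + N') (map Some w @ L)"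
  by (auto simp: is_comb_line_def words_def)

lemma is_comb_line_mono: "is_comb_line m' N L \<Longrightarrow> m' \<le> m \<Longrightarrow> is_comb_line m N L"
  by (auto simp: is_comb_line_def)

lemma constant_on_line_Suc:
  "constant_on_line \<chi> m L \<Longrightarrow> \<chi> (line_point L m) = \<chi> (line_point L 0) \<Longrightarrow>
    constant_on_line \<chi> (Suc m) L"
  unfolding constant_on_line_def by (metis less_SucE)

lemma hales_jewett_1: "hales_jewett 1 k 1"
  unfolding hales_jewett_def constant_on_line_def
  by (intro allI impI exI[of _ "[None]"]) (auto simp: is_comb_line_def)

lemma hales_jewett_pos:
  assumes "hales_jewett m k N" "k \<ge> 1"
  shows "N \<ge> 1"
proof -
  have "card ((\<lambda>_. 0::nat) ` words m N) \<le> card {0::nat}" by (rule card_mono) auto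
  then have "card ((\<lambda>_. 0::nat) ` words m N) \<le> k" using assms(2) by simp
  then obtain L where "is_comb_line m N L" using assms(1) unfolding hales_jewett_def by blast
  then show ?thesis unfolding is_comb_line_def by (cases L) auto
qed

definition colour_focusing :: "nat \<Rightarrow> nat \<Rightarrow> nat \<Rightarrow> nat \<Rightarrow> bool" where
  "colour_focusing m k r N \<longleftrightarrow> (\<forall>\<chi>::nat list \<Rightarrow> nat. card (\<chi> ` words (Suc m) N) \<le> k \<longrightarrow>
      (\<exists>L. is_comb_line (Suc m) N L \<and> constant_on_line \<chi> (Suc m) L) \<or>
      (\<exists>Ls f. length Ls = r \<and> f \<in> words (Suc m) N \<and>
         (\<forall>L\<in>set Ls. is_comb_line (Suc m) N L \<and> line_point L m = f \<and> constant_on_line \<chi> m L) \<and>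
         distinct (map (\<lambda>L. \<chi> (line_point L 0)) Ls)))"

lemma colour_focusing_0: "colour_focusing m k 0 0"
  unfolding colour_focusing_def
  by (intro allI impI disjI2 exI[of _ "[]"]) (auto simp: words_def)

text \<open>Colouring a word \<open>v\<close> by the tuple of colours of all \<open>u @ v\<close> turns a line for the
  product colouring into one along which the colour of \<open>u @ _\<close> is constant for every \<open>u\<close>.\<close>

lemma line_constant_for_all_prefixes:
  fixes \<chi> :: "nat list \<Rightarrow> nat"
  assumes hj: "hales_jewett m (k ^ card (words m' N)) N'"
    and card: "card (\<chi> ` words m' (N + N')) \<le> k" and "m \<le> m'"
  obtains L where "is_comb_line m N' L"
    "\<And>u i. u \<in> words m' N \<Longrightarrow> i < m \<Longrightarrow> \<chi> (u @ line_point L i) = \<chi> (u @ line_point L 0)"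
proof -
  obtain us where us: "set us = words m' N" "distinct us"
    using finite_distinct_list[OF finite_words] by blast
  define colours where "colours = {cs. set cs \<subseteq> \<chi> ` words m' (N + N') \<and> length cs = length us}"
  have fin: "finite (\<chi> ` words m' (N + N'))" by (simp add: finite_words)
  define \<chi>' where "\<chi>' v = to_nat (map (\<lambda>u. \<chi> (u @ v)) us)" for v
  have "\<chi>' ` words m N' \<subseteq> to_nat ` colours"
  proof
    fix c assume "c \<in> \<chi>' ` words m N'"
    then obtain v where v: "v \<in> words m N'" "c = \<chi>' v" by blast
    have "map (\<lambda>u. \<chi> (u @ v)) us \<in> colours"
      using us(1) words_mono[OF v(1) \<open>m \<le> m'\<close>] by (auto simp: colours_def intro: append_in_words)
    then show "c \<in> to_nat ` colours" using v(2) by (simp add: \<chi>'_def)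
  qed
  then have "card (\<chi>' ` words m N') \<le> card (to_nat ` colours)"
    using fin by (intro card_mono) (auto simp: colours_def intro!: finite_lists_length_eq)
  also have "\<dots> \<le> card colours"
    using fin by (intro card_image_le) (auto simp: colours_def intro!: finite_lists_length_eq)
  also have "\<dots> = card (\<chi> ` words m' (N + N')) ^ length us"
    unfolding colours_def using fin by (rule card_lists_length_eq)
  also have "\<dots> \<le> k ^ card (words m' N)"
    using card distinct_card[OF us(2)] us(1) by (simp add: power_mono)
  finally obtain L where L: "is_comb_line m N' L" "constant_on_line \<chi>' m L"
    using hj unfolding hales_jewett_def by blast
  show thesis
  proof (rule that[OF L(1)])
    fix u i assume "u \<in> words m' N" "i < m"
    moreover have "\<chi>' (line_point L i) = \<chi>' (line_point L 0)"
      using L(2) \<open>i < m\<close> unfolding constant_on_line_def by blast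
    then have "map (\<lambda>u. \<chi> (u @ line_point L i)) us = map (\<lambda>u. \<chi> (u @ line_point L 0)) us"
      unfolding \<chi>'_def by (rule injD[OF inj_to_nat])
    ultimately show "\<chi> (u @ line_point L i) = \<chi> (u @ line_point L 0)"
      using us(1) unfolding map_eq_conv by blast
  qed
qed

lemma constant_on_line_extend:
  assumes "is_comb_line m N L" "constant_on_line (\<lambda>u. \<chi> (u @ v)) m L" "v \<in> words m N'"
  shows "is_comb_line m (N + N') (L @ map Some v) \<and> constant_on_line \<chi> m (L @ map Some v)"
  using assms is_comb_line_append_word
  unfolding constant_on_line_def line_point_append line_point_map_Some by blast

lemma focused_lines_extend:
  assumes L: "is_comb_line (Suc m) N' L"
      "\<And>u i. u \<in> words (Suc m) N \<Longrightarrow> i < m \<Longrightarrow> \<chi> (u @ line_point L i) = \<chi> (u @ line_point L 0)"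
    and Ls: "\<forall>L'\<in>set Ls. is_comb_line (Suc m) N L' \<and> line_point L' m = f \<and>
        constant_on_line (\<lambda>u. \<chi> (u @ line_point L 0)) m L'"
    and f: "f \<in> words (Suc m) N"
    and distinct: "distinct (map (\<lambda>L'. \<chi> (line_point L' 0 @ line_point L 0)) Ls)"
    and new: "\<forall>L'\<in>set Ls. \<chi> (f @ line_point L 0) \<noteq> \<chi> (line_point L' 0 @ line_point L 0)"
  defines "Ls' \<equiv> map (\<lambda>L'. L' @ L) Ls @ [map Some f @ L]"
  shows "length Ls' = Suc (length Ls)" "f @ line_point L m \<in> words (Suc m) (N + N')"
    "\<forall>L'\<in>set Ls'. is_comb_line (Suc m) (N + N') L' \<and> line_point L' m = f @ line_point L m \<and>
        constant_on_line \<chi> m L'"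
    "distinct (map (\<lambda>L'. \<chi> (line_point L' 0)) Ls')"
proof -
  show "length Ls' = Suc (length Ls)" by (simp add: Ls'_def)
  show "f @ line_point L m \<in> words (Suc m) (N + N')"
    using f line_point_in_words[OF L(1)] by (simp add: append_in_words)
  show "distinct (map (\<lambda>L'. \<chi> (line_point L' 0)) Ls')"
    using distinct new by (auto simp: Ls'_def comp_def)
  show "\<forall>L'\<in>set Ls'. is_comb_line (Suc m) (N + N') L' \<and> line_point L' m = f @ line_point L m \<and>
      constant_on_line \<chi> m L'"
  proof
    fix L' assume "L' \<in> set Ls'"
    then consider (old) L0 where "L0 \<in> set Ls" "L' = L0 @ L" | (focus) "L' = map Some f @ L"
      unfolding Ls'_def by auto
    then show "is_comb_line (Suc m) (N + N') L' \<and> line_point L' m = f @ line_point L m \<and>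
        constant_on_line \<chi> m L'"
    proof cases
      case old
      have L0: "is_comb_line (Suc m) N L0" "line_point L0 m = f"
          "constant_on_line (\<lambda>u. \<chi> (u @ line_point L 0)) m L0"
        using Ls old(1) by blast+
      have "\<chi> (line_point L0 i @ line_point L i) = \<chi> (line_point L0 0 @ line_point L 0)" if "i < m" for i
      proof -
        have "line_point L0 i \<in> words (Suc m) N" using line_point_in_words[OF L0(1)] that by simp
        then have "\<chi> (line_point L0 i @ line_point L i) = \<chi> (line_point L0 i @ line_point L 0)"
          using L(2) that by blast
        also have "\<dots> = \<chi> (line_point L0 0 @ line_point L 0)"
          using L0(3) that unfolding constant_on_line_def by blast
        finally show ?thesis .
      qed
      then show ?thesis using L0(2) is_comb_line_append[OF L0(1) L(1)]
        unfolding old(2) constant_on_line_def line_point_append by blast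
    next
      case focus
      show ?thesis using L(2)[OF f] is_comb_line_word_append[OF L(1) f]
        unfolding focus constant_on_line_def line_point_append line_point_map_Some by blast
    qed
  qed
qed

lemma colour_focusing_Suc:
  assumes hj: "\<And>K. \<exists>N. hales_jewett m K N" and focusing: "colour_focusing m k r N"
  shows "\<exists>N'. colour_focusing m k (Suc r) N'"
proof -
  obtain N' where N': "hales_jewett m (k ^ card (words (Suc m) N)) N'" using hj by blast
  show ?thesis
  proof (intro exI[of _ "N + N'"], unfold colour_focusing_def, intro allI impI)
    fix \<chi> :: "nat list \<Rightarrow> nat"
    assume card: "card (\<chi> ` words (Suc m) (N + N')) \<le> k"
    obtain L where L: "is_comb_line m N' L"
      "\<And>u i. u \<in> words (Suc m) N \<Longrightarrow> i < m \<Longrightarrow> \<chi> (u @ line_point L i) = \<chi> (u @ line_point L 0)"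
      using line_constant_for_all_prefixes[OF N' card] by auto
    have L': "is_comb_line (Suc m) N' L" using L(1) by (rule is_comb_line_mono) simp
    have L0: "line_point L 0 \<in> words (Suc m) N'" using line_point_in_words[OF L'] by simp
    define \<chi>' where "\<chi>' = (\<lambda>u. \<chi> (u @ line_point L 0))"
    have "\<chi>' ` words (Suc m) N \<subseteq> \<chi> ` words (Suc m) (N + N')"
      using L0 by (auto simp: \<chi>'_def image_iff intro!: append_in_words)
    then have "card (\<chi>' ` words (Suc m) N) \<le> k"
      using card card_mono[OF finite_imageI[OF finite_words]] by (meson le_trans)
    from focusing[unfolded colour_focusing_def, rule_format, OF this]
    consider (line) L1 where "is_comb_line (Suc m) N L1" "constant_on_line \<chi>' (Suc m) L1"
      | (focused) Ls f where "length Ls = r" "f \<in> words (Suc m) N"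
         "\<forall>L'\<in>set Ls. is_comb_line (Suc m) N L' \<and> line_point L' m = f \<and> constant_on_line \<chi>' m L'"
         "distinct (map (\<lambda>L'. \<chi>' (line_point L' 0)) Ls)"
      by blast
    then show "(\<exists>L. is_comb_line (Suc m) (N + N') L \<and> constant_on_line \<chi> (Suc m) L) \<or>
       (\<exists>Ls f. length Ls = Suc r \<and> f \<in> words (Suc m) (N + N') \<and>
         (\<forall>L\<in>set Ls. is_comb_line (Suc m) (N + N') L \<and> line_point L m = f \<and> constant_on_line \<chi> m L) \<and>
         distinct (map (\<lambda>L. \<chi> (line_point L 0)) Ls))"
    proof cases
      case line
      then show ?thesis using constant_on_line_extend[OF _ _ L0] unfolding \<chi>'_def by blast
    next
      case focused
      show ?thesis
      proof (cases "\<exists>L1\<in>set Ls. \<chi>' f = \<chi>' (line_point L1 0)")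
        case True
        then obtain L1 where L1: "L1 \<in> set Ls" "\<chi>' f = \<chi>' (line_point L1 0)" by blast
        then have "is_comb_line (Suc m) N L1" "constant_on_line \<chi>' (Suc m) L1"
          using focused(3) constant_on_line_Suc[of \<chi>' m L1] by auto
        then show ?thesis using constant_on_line_extend[OF _ _ L0] unfolding \<chi>'_def by blast
      next
        case False
        then have "\<forall>L1\<in>set Ls. \<chi> (f @ line_point L 0) \<noteq> \<chi> (line_point L1 0 @ line_point L 0)"
          by (auto simp: \<chi>'_def)
        note extended = focused_lines_extend[OF L' L(2) focused(3)[unfolded \<chi>'_def] focused(2)
            focused(4)[unfolded \<chi>'_def] this]
        show ?thesis
          by (intro disjI2 exI[of _ "map (\<lambda>L1. L1 @ L) Ls @ [map Some f @ L]"]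
              exI[of _ "f @ line_point L m"] conjI) (use extended focused(1) in simp_all)
      qed
    qed
  qed
qed

lemma colour_focusing_exists:
  assumes "\<And>K. \<exists>N. hales_jewett m K N"
  shows "\<exists>N. colour_focusing m k r N"
proof (induct r)
  case 0 then show ?case using colour_focusing_0 by blast
next
  case (Suc r) then show ?case using colour_focusing_Suc[OF assms] by blast
qed

text \<open>With \<open>k\<close> colours, \<open>k\<close> focused lines with distinct colours exhaust all colours, so
  the colour of the focus completes one of them to a monochromatic line.\<close>

lemma hales_jewett_Suc:
  assumes "\<And>K. \<exists>N. hales_jewett m K N"
  shows "\<exists>N. hales_jewett (Suc m) k N"
proof -
  obtain N where N: "colour_focusing m k k N" using colour_focusing_exists[OF assms] by blast
  show ?thesis
  proof (rule exI[of _ N], unfold hales_jewett_def, intro allI impI)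
    fix \<chi> :: "nat list \<Rightarrow> nat"
    assume card: "card (\<chi> ` words (Suc m) N) \<le> k"
    from N[unfolded colour_focusing_def, rule_format, OF card]
    consider (line) L where "is_comb_line (Suc m) N L" "constant_on_line \<chi> (Suc m) L"
      | (focused) Ls f where "length Ls = k" "f \<in> words (Suc m) N"
         "\<forall>L\<in>set Ls. is_comb_line (Suc m) N L \<and> line_point L m = f \<and> constant_on_line \<chi> m L"
         "distinct (map (\<lambda>L. \<chi> (line_point L 0)) Ls)"
      by blast
    then show "\<exists>L. is_comb_line (Suc m) N L \<and> constant_on_line \<chi> (Suc m) L"
    proof cases
      case line then show ?thesis by blast
    next
      case focused
      define colours where "colours = set (map (\<lambda>L. \<chi> (line_point L 0)) Ls)"
      have "insert (\<chi> f) colours \<subseteq> \<chi> ` words (Suc m) N"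
        using focused(2,3) line_point_in_words by (auto simp: colours_def)
      then have "card (insert (\<chi> f) colours) \<le> k"
        using card card_mono[OF finite_imageI[OF finite_words]] by (meson le_trans)
      moreover have "card colours = k" using distinct_card[OF focused(4)] focused(1) by (simp add: colours_def)
      ultimately have "\<chi> f \<in> colours" by (auto simp: colours_def card_insert_if split: if_splits)
      then obtain L where L: "L \<in> set Ls" "\<chi> f = \<chi> (line_point L 0)" by (auto simp: colours_def)
      then show ?thesis using focused(3) constant_on_line_Suc[of \<chi> m L] by auto
    qed
  qed
qed

theorem hales_jewett_exists: "m \<ge> 1 \<Longrightarrow> \<exists>N. hales_jewett m k N"
proof (induct m arbitrary: k rule: nat_induct_at_least)
  case base then show ?case using hales_jewett_1 by blast
next
  case (Suc m) then show ?case using hales_jewett_Suc by blast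
qed

section \<open>Partite structures\<close>

text \<open>Every vertex of a partite structure is projected to a position \<open>(i, c)\<close>: a part \<open>i\<close>
  and a column \<open>c\<close>.\<close>

record 'v pstruc =
  pverts :: "'v set"
  proj :: "'v \<Rightarrow> nat \<times> nat"
  pedge :: "'v \<Rightarrow> 'v \<Rightarrow> bool"

definition partite_pair :: "nat \<Rightarrow> nat \<Rightarrow> bool \<Rightarrow> bool \<Rightarrow> bool" where
  "partite_pair i j e e' \<longleftrightarrow> (i = j \<longrightarrow> \<not> e \<and> \<not> e') \<and> (i \<noteq> j \<longrightarrow> e \<noteq> e')"

definition partite :: "nat \<Rightarrow> 'v pstruc \<Rightarrow> bool" where
  "partite n P \<longleftrightarrow> finite (pverts P) \<and> (\<forall>x\<in>pverts P. fst (proj P x) < n) \<and>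
     (\<forall>x\<in>pverts P. \<forall>y\<in>pverts P.
        partite_pair (fst (proj P x)) (fst (proj P y)) (pedge P x y) (pedge P y x))"

text \<open>A pattern is a partite structure on a set of positions in which every vertex is
  projected to itself.\<close>

definition is_pattern :: "(nat \<times> nat) set \<Rightarrow> (nat \<times> nat \<Rightarrow> nat \<times> nat \<Rightarrow> bool) \<Rightarrow> bool" where
  "is_pattern T eT \<longleftrightarrow> finite T \<and> (\<forall>d\<in>T. \<forall>d'\<in>T. partite_pair (fst d) (fst d') (eT d d') (eT d' d))"

definition copies ::
  "'v pstruc \<Rightarrow> (nat \<times> nat) set \<Rightarrow> (nat \<times> nat \<Rightarrow> nat \<times> nat \<Rightarrow> bool) \<Rightarrow> (nat \<times> nat \<Rightarrow> 'v) set" where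
  "copies X T eT = {\<psi>. (\<forall>d\<in>T. \<psi> d \<in> pverts X \<and> proj X (\<psi> d) = d) \<and>
     (\<forall>d\<in>T. \<forall>d'\<in>T. pedge X (\<psi> d) (\<psi> d') = eT d d')}"

definition pembeddings :: "'u pstruc \<Rightarrow> 'v pstruc \<Rightarrow> ('u \<Rightarrow> 'v) set" where
  "pembeddings X Y = {\<Phi>. inj_on \<Phi> (pverts X) \<and> \<Phi> ` pverts X \<subseteq> pverts Y \<and>
     (\<forall>x\<in>pverts X. proj Y (\<Phi> x) = proj X x) \<and>
     (\<forall>x\<in>pverts X. \<forall>y\<in>pverts X. pedge Y (\<Phi> x) (\<Phi> y) = pedge X x y)}"

definition partite_ramsey :: "nat \<Rightarrow> 'u pstruc \<Rightarrow> 'v pstruc \<Rightarrow>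
    ((nat \<times> nat) set \<times> (nat \<times> nat \<Rightarrow> nat \<times> nat \<Rightarrow> bool)) set \<Rightarrow> bool" where
  "partite_ramsey k X Y \<T> \<longleftrightarrow> (\<forall>\<chi> :: 'v set \<Rightarrow> nat.
     (\<forall>(T, eT)\<in>\<T>. \<forall>\<psi>\<in>copies Y T eT. \<chi> (\<psi> ` T) < k) \<longrightarrow>
     (\<exists>\<Phi>\<in>pembeddings X Y. \<forall>(T, eT)\<in>\<T>. \<exists>c. \<forall>\<psi>\<in>copies X T eT. \<chi> (\<Phi> ` \<psi> ` T) = c))"

lemma partite_pair_sym: "partite_pair i j e e' \<longleftrightarrow> partite_pair j i e' e"
  by (auto simp: partite_pair_def)

lemma partite_pair_order: "partite_pair i j (i < j) (j < i)"
  by (auto simp: partite_pair_def)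

lemma partiteD:
  assumes "partite n P"
  shows "finite (pverts P)" "x \<in> pverts P \<Longrightarrow> fst (proj P x) < n"
    "x \<in> pverts P \<Longrightarrow> y \<in> pverts P \<Longrightarrow>
      partite_pair (fst (proj P x)) (fst (proj P y)) (pedge P x y) (pedge P y x)"
    "x \<in> pverts P \<Longrightarrow> y \<in> pverts P \<Longrightarrow> fst (proj P x) = fst (proj P y) \<Longrightarrow> \<not> pedge P x y"
    "x \<in> pverts P \<Longrightarrow> y \<in> pverts P \<Longrightarrow> fst (proj P x) \<noteq> fst (proj P y) \<Longrightarrow>
      pedge P x y \<noteq> pedge P y x"
  using assms unfolding partite_def partite_pair_def by blast+

lemma is_patternD:
  assumes "is_pattern T eT"
  shows "finite T" "d \<in> T \<Longrightarrow> d' \<in> T \<Longrightarrow> fst d = fst d' \<Longrightarrow> \<not> eT d d'"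
    "d \<in> T \<Longrightarrow> d' \<in> T \<Longrightarrow> fst d \<noteq> fst d' \<Longrightarrow> eT d d' \<noteq> eT d' d"
  using assms unfolding is_pattern_def partite_pair_def by blast+

lemma pembeddings_comp: "\<Phi> \<in> pembeddings X Y \<Longrightarrow> \<Phi>' \<in> pembeddings Y Z \<Longrightarrow> \<Phi>' \<circ> \<Phi> \<in> pembeddings X Z"
  unfolding pembeddings_def by (auto simp: inj_on_def image_subset_iff)

lemma pembeddings_copies: "\<Phi> \<in> pembeddings X Y \<Longrightarrow> \<psi> \<in> copies X T eT \<Longrightarrow> \<Phi> \<circ> \<psi> \<in> copies Y T eT"
  unfolding pembeddings_def copies_def by (auto simp: image_subset_iff)

lemma partite_ramsey_empty: "\<Phi> \<in> pembeddings X Y \<Longrightarrow> partite_ramsey k X Y {}"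
  unfolding partite_ramsey_def by blast

text \<open>The colouring of \<open>Z\<close> is pulled back to \<open>Y\<close> along the embedding that is
  monochromatic for \<open>\<T>\<^sub>2\<close>.\<close>

lemma partite_ramsey_compose:
  assumes XY: "partite_ramsey k X Y \<T>\<^sub>1" and YZ: "partite_ramsey k Y Z \<T>\<^sub>2"
  shows "partite_ramsey k X Z (\<T>\<^sub>1 \<union> \<T>\<^sub>2)"
  unfolding partite_ramsey_def
proof (intro allI impI)
  fix \<chi> :: "'c set \<Rightarrow> nat"
  assume bounded: "\<forall>(T, eT)\<in>\<T>\<^sub>1 \<union> \<T>\<^sub>2. \<forall>\<psi>\<in>copies Z T eT. \<chi> (\<psi> ` T) < k"
  then obtain \<Phi>\<^sub>2 where \<Phi>\<^sub>2: "\<Phi>\<^sub>2 \<in> pembeddings Y Z"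
    and mono\<^sub>2: "\<forall>(T, eT)\<in>\<T>\<^sub>2. \<exists>c. \<forall>\<psi>\<in>copies Y T eT. \<chi> (\<Phi>\<^sub>2 ` \<psi> ` T) = c"
    using YZ unfolding partite_ramsey_def by blast
  have "\<forall>(T, eT)\<in>\<T>\<^sub>1. \<forall>\<psi>\<in>copies Y T eT. \<chi> (\<Phi>\<^sub>2 ` \<psi> ` T) < k"
    using bounded pembeddings_copies[OF \<Phi>\<^sub>2] by (fastforce simp: image_comp)
  then obtain \<Phi>\<^sub>1 where \<Phi>\<^sub>1: "\<Phi>\<^sub>1 \<in> pembeddings X Y"
    and mono\<^sub>1: "\<forall>(T, eT)\<in>\<T>\<^sub>1. \<exists>c. \<forall>\<psi>\<in>copies X T eT. \<chi> (\<Phi>\<^sub>2 ` \<Phi>\<^sub>1 ` \<psi> ` T) = c"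
    using XY[unfolded partite_ramsey_def, THEN spec[of _ "\<lambda>S. \<chi> (\<Phi>\<^sub>2 ` S)"]] by blast
  have "\<forall>(T, eT)\<in>\<T>\<^sub>2. \<exists>c. \<forall>\<psi>\<in>copies X T eT. \<chi> (\<Phi>\<^sub>2 ` \<Phi>\<^sub>1 ` \<psi> ` T) = c"
    using mono\<^sub>2 pembeddings_copies[OF \<Phi>\<^sub>1] by (fastforce simp: image_comp)
  then show "\<exists>\<Phi>\<in>pembeddings X Z. \<forall>(T, eT)\<in>\<T>\<^sub>1 \<union> \<T>\<^sub>2. \<exists>c. \<forall>\<psi>\<in>copies X T eT. \<chi> (\<Phi> ` \<psi> ` T) = c"
    using mono\<^sub>1 unfolding image_comp comp_def
    by (intro bexI[OF _ pembeddings_comp[OF \<Phi>\<^sub>1 \<Phi>\<^sub>2]]) (auto simp: comp_def)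
qed

text \<open>Relabelling by natural numbers keeps the type of the structures fixed while the
  construction is iterated.\<close>

definition relabel :: "'v pstruc \<Rightarrow> nat pstruc" where
  "relabel P = \<lparr>pverts = to_nat_on (pverts P) ` pverts P, proj = proj P \<circ> from_nat_into (pverts P),
     pedge = (\<lambda>x y. pedge P (from_nat_into (pverts P) x) (from_nat_into (pverts P) y))\<rparr>"

lemma partite_relabel:
  assumes "partite n P"
  shows "partite n (relabel P)"
proof -
  have "countable (pverts P)" using partiteD(1)[OF assms] by (rule countable_finite)
  then show ?thesis
    using assms unfolding partite_def relabel_def by auto
qed

lemma to_nat_on_in_pembeddings:
  assumes "finite (pverts P)"
  shows "to_nat_on (pverts P) \<in> pembeddings P (relabel P)"
proof -
  have "countable (pverts P)" using assms by (rule countable_finite)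
  then show ?thesis unfolding pembeddings_def relabel_def by auto
qed

lemma partite_ramsey_relabel:
  "partite_ramsey k X P \<T> \<Longrightarrow> finite (pverts P) \<Longrightarrow> partite_ramsey k X (relabel P) \<T>"
  using partite_ramsey_compose partite_ramsey_empty[OF to_nat_on_in_pembeddings] by fastforce

section \<open>The partite lemma\<close>

text \<open>The edge between two tuples of the Hales--Jewett power is the one prescribed by the
  pattern, reversed as soon as one coordinate deviates from the pattern. Thus tuples of
  copies of the pattern are copies again, and along a combinatorial line the edges are
  those of the free coordinate.\<close>

definition hj_power :: "'v pstruc \<Rightarrow> (nat \<times> nat \<Rightarrow> nat \<times> nat \<Rightarrow> bool) \<Rightarrow> nat \<Rightarrow> 'v list pstruc" where
  "hj_power R eT N = \<lparr>
     pverts = {xs. length xs = N \<and> set xs \<subseteq> pverts R \<and> (\<exists>d. \<forall>x\<in>set xs. proj R x = d)},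
     proj = \<lambda>xs. proj R (xs ! 0),
     pedge = \<lambda>xs ys. eT (proj R (xs ! 0)) (proj R (ys ! 0)) \<noteq>
       (\<exists>t<N. pedge R (xs ! t) (ys ! t) \<noteq> eT (proj R (xs ! 0)) (proj R (ys ! 0)))\<rparr>"

definition word_copy :: "(nat \<times> nat \<Rightarrow> 'v) list \<Rightarrow> nat list \<Rightarrow> nat \<times> nat \<Rightarrow> 'v list" where
  "word_copy cs w d = map (\<lambda>c. (cs ! c) d) w"

definition line_embedding :: "'v pstruc \<Rightarrow> (nat \<times> nat \<Rightarrow> 'v) list \<Rightarrow> nat option list \<Rightarrow> 'v \<Rightarrow> 'v list" where
  "line_embedding R cs L z = map (case_option z (\<lambda>c. (cs ! c) (proj R z))) L"

lemma hj_power_simps: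
  "xs \<in> pverts (hj_power R eT N) \<longleftrightarrow>
     length xs = N \<and> set xs \<subseteq> pverts R \<and> (\<exists>d. \<forall>x\<in>set xs. proj R x = d)"
  "proj (hj_power R eT N) xs = proj R (xs ! 0)"
  "pedge (hj_power R eT N) xs ys \<longleftrightarrow> eT (proj R (xs ! 0)) (proj R (ys ! 0)) \<noteq>
     (\<exists>t<N. pedge R (xs ! t) (ys ! t) \<noteq> eT (proj R (xs ! 0)) (proj R (ys ! 0)))"
  by (simp_all add: hj_power_def)

lemma partite_pair_deviation:
  assumes "partite_pair i j e e'" "\<forall>t<N. partite_pair i j (f t) (g t)"
  shows "partite_pair i j (e \<noteq> (\<exists>t<N. f t \<noteq> e)) (e' \<noteq> (\<exists>t<N. g t \<noteq> e'))"
  using assms unfolding partite_pair_def by (cases "i = j") auto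

lemma hj_power_vertex:
  assumes "xs \<in> pverts (hj_power R eT N)" "t < N"
  shows "xs ! t \<in> pverts R" "proj R (xs ! t) = proj R (xs ! 0)"
proof -
  obtain d where "length xs = N" "set xs \<subseteq> pverts R" "\<forall>x\<in>set xs. proj R x = d"
    using assms(1) by (auto simp: hj_power_def)
  moreover have "xs ! t \<in> set xs" "xs ! 0 \<in> set xs" using assms(2) calculation(1) by auto
  ultimately show "xs ! t \<in> pverts R" "proj R (xs ! t) = proj R (xs ! 0)" by auto
qed

lemma partite_hj_power:
  assumes R: "partite n R" and T: "is_pattern T eT" and RT: "proj R ` pverts R \<subseteq> T" and "N \<ge> 1"
  shows "partite n (hj_power R eT N)"
  unfolding partite_def
proof (intro conjI ballI)
  have "pverts (hj_power R eT N) \<subseteq> {xs. set xs \<subseteq> pverts R \<and> length xs = N}"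
    by (auto simp: hj_power_def)
  then show "finite (pverts (hj_power R eT N))"
    using finite_lists_length_eq[OF partiteD(1)[OF R]] by (rule finite_subset)
next
  fix xs assume xs: "xs \<in> pverts (hj_power R eT N)"
  have "xs ! 0 \<in> pverts R" using hj_power_vertex(1)[OF xs] \<open>N \<ge> 1\<close> by simp
  then show "fst (proj (hj_power R eT N) xs) < n"
    using partiteD(2)[OF R] by (simp add: hj_power_def)
next
  fix xs ys assume xs: "xs \<in> pverts (hj_power R eT N)" and ys: "ys \<in> pverts (hj_power R eT N)"
  define d where "d = proj R (xs ! 0)"
  define d' where "d' = proj R (ys ! 0)"
  have coord: "xs ! t \<in> pverts R" "proj R (xs ! t) = d" "ys ! t \<in> pverts R" "proj R (ys ! t) = d'"
    if "t < N" for t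
    using hj_power_vertex[OF xs that] hj_power_vertex[OF ys that] by (simp_all add: d_def d'_def)
  have "d \<in> T" "d' \<in> T" using coord[of 0] RT \<open>N \<ge> 1\<close> by auto
  then have pattern: "partite_pair (fst d) (fst d') (eT d d') (eT d' d)"
    using T unfolding is_pattern_def by blast
  have coords: "\<forall>t<N. partite_pair (fst d) (fst d')
      (pedge R (xs ! t) (ys ! t)) (pedge R (ys ! t) (xs ! t))"
    using partiteD(3)[OF R] coord by fastforce
  have edges: "proj (hj_power R eT N) xs = d" "proj (hj_power R eT N) ys = d'"
    "pedge (hj_power R eT N) xs ys = (eT d d' \<noteq> (\<exists>t<N. pedge R (xs ! t) (ys ! t) \<noteq> eT d d'))"
    "pedge (hj_power R eT N) ys xs = (eT d' d \<noteq> (\<exists>t<N. pedge R (ys ! t) (xs ! t) \<noteq> eT d' d))"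
    by (simp_all add: hj_power_def d_def d'_def)
  show "partite_pair (fst (proj (hj_power R eT N) xs)) (fst (proj (hj_power R eT N) ys))
      (pedge (hj_power R eT N) xs ys) (pedge (hj_power R eT N) ys xs)"
    unfolding edges by (rule partite_pair_deviation[OF pattern coords])
qed

lemma restrict_in_copies: "restrict \<psi> T \<in> copies X T eT \<longleftrightarrow> \<psi> \<in> copies X T eT"
  by (simp add: copies_def)

lemma word_copy_in_copies:
  assumes cs: "set cs \<subseteq> copies R T eT" and w: "w \<in> words (length cs) N" and "N \<ge> 1"
  shows "word_copy cs w \<in> copies (hj_power R eT N) T eT"
proof -
  have c: "(cs ! c) d \<in> pverts R" "proj R ((cs ! c) d) = d"
    "d' \<in> T \<Longrightarrow> pedge R ((cs ! c) d) ((cs ! c) d') = eT d d'"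
    if "c \<in> set w" "d \<in> T" for c d d'
    using that cs w by (auto simp: words_def copies_def subset_iff)
  have len: "length w = N" using w by (simp add: words_def)
  have coord: "word_copy cs w d ! t = (cs ! (w ! t)) d" "w ! t \<in> set w" if "t < N" for d t
    using that len by (simp_all add: word_copy_def)
  have proj0: "proj R (word_copy cs w d ! 0) = d" if "d \<in> T" for d
    using coord[of 0] c(2)[OF _ that] \<open>N \<ge> 1\<close> by simp
  show ?thesis
    unfolding copies_def
  proof (intro CollectI conjI ballI)
    fix d assume d: "d \<in> T"
    have "\<forall>x\<in>set (word_copy cs w d). x \<in> pverts R \<and> proj R x = d"
      using c[OF _ d] by (auto simp: word_copy_def)
    then show "word_copy cs w d \<in> pverts (hj_power R eT N)"
      using len by (auto simp: hj_power_simps word_copy_def)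
    show "proj (hj_power R eT N) (word_copy cs w d) = d"
      using proj0[OF d] by (simp add: hj_power_simps)
  next
    fix d d' assume d: "d \<in> T" and d': "d' \<in> T"
    have "\<forall>t<N. pedge R (word_copy cs w d ! t) (word_copy cs w d' ! t) = eT d d'"
      using coord c(3)[OF _ d d'] by simp
    then show "pedge (hj_power R eT N) (word_copy cs w d) (word_copy cs w d') = eT d d'"
      using proj0[OF d] proj0[OF d'] by (simp add: hj_power_simps)
  qed
qed

lemma line_embedding_in_pembeddings:
  assumes cs: "set cs \<subseteq> copies R T eT" and L: "is_comb_line (length cs) N L"
    and RT: "proj R ` pverts R \<subseteq> T"
  shows "line_embedding R cs L \<in> pembeddings R (hj_power R eT N)"
proof -
  obtain t0 where t0: "t0 < N" "L ! t0 = None"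
    using L unfolding is_comb_line_def by (metis in_set_conv_nth)
  have N: "length L = N" using L by (simp add: is_comb_line_def)
  have "cs ! c \<in> copies R T eT" if "Some c \<in> set L" for c
    using that L cs unfolding is_comb_line_def by (meson nth_mem subsetD)
  then have c: "(cs ! c) (proj R z) \<in> pverts R" "proj R ((cs ! c) (proj R z)) = proj R z"
      "z' \<in> pverts R \<Longrightarrow> pedge R ((cs ! c) (proj R z)) ((cs ! c) (proj R z')) = eT (proj R z) (proj R z')"
    if "Some c \<in> set L" "z \<in> pverts R" for c z z'
    using that RT unfolding copies_def by blast+
  have coord: "line_embedding R cs L z ! t = (case L ! t of None \<Rightarrow> z | Some c \<Rightarrow> (cs ! c) (proj R z))"
    if "t < N" for z t
    using that N by (simp add: line_embedding_def)
  have some: "Some c \<in> set L" if "t < N" "L ! t = Some c" for t c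
    using that N by (metis nth_mem)
  have vertex: "line_embedding R cs L z ! t \<in> pverts R \<and> proj R (line_embedding R cs L z ! t) = proj R z"
    if "z \<in> pverts R" "t < N" for z t
    using coord[OF that(2)] c[OF some[OF that(2)] that(1)] that(1) by (cases "L ! t") auto
  show ?thesis
    unfolding pembeddings_def
  proof (intro CollectI conjI ballI subsetI inj_onI)
    fix z z' assume "line_embedding R cs L z = line_embedding R cs L z'"
    then have "line_embedding R cs L z ! t0 = line_embedding R cs L z' ! t0" by simp
    then show "z = z'" using coord[OF t0(1), of z] coord[OF t0(1), of z'] t0(2) by simp
  next
    fix xs assume "xs \<in> line_embedding R cs L ` pverts R"
    then obtain z where z: "z \<in> pverts R" "xs = line_embedding R cs L z" by blast
    have "length xs = N" using N z(2) by (simp add: line_embedding_def)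
    moreover have "\<forall>x\<in>set xs. x \<in> pverts R \<and> proj R x = proj R z"
      using vertex[OF z(1)] calculation unfolding z(2) by (auto simp: in_set_conv_nth)
    ultimately show "xs \<in> pverts (hj_power R eT N)" unfolding hj_power_simps by blast
  next
    fix z assume "z \<in> pverts R"
    then show "proj (hj_power R eT N) (line_embedding R cs L z) = proj R z"
      using vertex t0(1) by (simp add: hj_power_def)
  next
    fix z z' assume z: "z \<in> pverts R" and z': "z' \<in> pverts R"
    have "(\<exists>t<N. pedge R (line_embedding R cs L z ! t) (line_embedding R cs L z' ! t) \<noteq>
        eT (proj R z) (proj R z')) \<longleftrightarrow> pedge R z z' \<noteq> eT (proj R z) (proj R z')"
    proof
      assume "\<exists>t<N. pedge R (line_embedding R cs L z ! t) (line_embedding R cs L z' ! t) \<noteq>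
          eT (proj R z) (proj R z')"
      then obtain t where "t < N"
        "pedge R (line_embedding R cs L z ! t) (line_embedding R cs L z' ! t) \<noteq> eT (proj R z) (proj R z')"
        by blast
      then show "pedge R z z' \<noteq> eT (proj R z) (proj R z')"
        using coord[OF \<open>t < N\<close>] c(3)[OF some[OF \<open>t < N\<close>] z z'] by (cases "L ! t") auto
    qed (use t0 coord in auto)
    then show "pedge (hj_power R eT N) (line_embedding R cs L z) (line_embedding R cs L z') = pedge R z z'"
      using vertex[OF z, of 0] vertex[OF z', of 0] t0(1) by (auto simp: hj_power_def)
  qed
qed

lemma line_embedding_copy:
  assumes "\<And>d. d \<in> T \<Longrightarrow> (cs ! j) d = \<psi> d \<and> proj R (\<psi> d) = d" "d \<in> T"
  shows "line_embedding R cs L (\<psi> d) = word_copy cs (line_point L j) d"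
  using assms unfolding line_embedding_def word_copy_def line_point_def
  by (auto intro!: map_cong split: option.split)

text \<open>Coordinates of a word pick copies of the pattern from an enumeration \<open>cs\<close> of all
  of them; a monochromatic combinatorial line for the induced colouring of words yields the
  required embedding.\<close>

lemma partite_ramsey_hj_power:
  assumes cs: "set cs \<subseteq> copies R T eT" and all: "\<forall>\<psi>\<in>copies R T eT. restrict \<psi> T \<in> set cs"
    and N: "hales_jewett (length cs) k N" "N \<ge> 1" and RT: "proj R ` pverts R \<subseteq> T"
  shows "partite_ramsey k R (hj_power R eT N) {(T, eT)}"
  unfolding partite_ramsey_def
proof (intro allI impI)
  fix \<chi>
  assume "\<forall>(T', eT')\<in>{(T, eT)}. \<forall>\<psi>\<in>copies (hj_power R eT N) T' eT'. \<chi> (\<psi> ` T') < k"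
  then have "\<chi> (word_copy cs w ` T) < k" if "w \<in> words (length cs) N" for w
    using word_copy_in_copies[OF cs that N(2)] by simp
  then have "card ((\<lambda>w. \<chi> (word_copy cs w ` T)) ` words (length cs) N) \<le> card {..<k}"
    by (intro card_mono) auto
  then obtain L where L: "is_comb_line (length cs) N L"
    "constant_on_line (\<lambda>w. \<chi> (word_copy cs w ` T)) (length cs) L"
    using N(1) unfolding hales_jewett_def by auto
  have "\<chi> (line_embedding R cs L ` \<psi> ` T) = \<chi> (word_copy cs (line_point L 0) ` T)"
    if \<psi>: "\<psi> \<in> copies R T eT" for \<psi>
  proof -
    obtain j where j: "j < length cs" "cs ! j = restrict \<psi> T"
      using \<psi> all by (metis in_set_conv_nth)
    have "line_embedding R cs L (\<psi> d) = word_copy cs (line_point L j) d" if "d \<in> T" for d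
      by (rule line_embedding_copy) (use j(2) \<psi> that in \<open>auto simp: copies_def\<close>)
    then have "line_embedding R cs L ` \<psi> ` T = word_copy cs (line_point L j) ` T"
      by (simp add: image_image cong: image_cong)
    moreover have "\<chi> (word_copy cs (line_point L j) ` T) = \<chi> (word_copy cs (line_point L 0) ` T)"
      using L(2) j(1) unfolding constant_on_line_def by blast
    ultimately show ?thesis by simp
  qed
  then show "\<exists>\<Phi>\<in>pembeddings R (hj_power R eT N). \<forall>(T', eT')\<in>{(T, eT)}.
      \<exists>c. \<forall>\<psi>\<in>copies R T' eT'. \<chi> (\<Phi> ` \<psi> ` T') = c"
    using line_embedding_in_pembeddings[OF cs L(1) RT] by blast
qed

theorem partite_lemma:
  assumes T: "is_pattern T eT" and R: "partite n R" and RT: "proj R ` pverts R \<subseteq> T" and "k \<ge> 1"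
  shows "\<exists>N. partite n (hj_power R eT N) \<and> partite_ramsey k R (hj_power R eT N) {(T, eT)}"
proof -
  have "(\<lambda>\<psi>. restrict \<psi> T) ` copies R T eT \<subseteq> PiE T (\<lambda>_. pverts R)"
    unfolding copies_def by (auto simp: PiE_iff)
  then have fin: "finite ((\<lambda>\<psi>. restrict \<psi> T) ` copies R T eT)"
    using finite_PiE[OF is_patternD(1)[OF T], of "\<lambda>_. pverts R"] partiteD(1)[OF R]
    by (meson finite_subset)
  obtain cs where cs: "set cs = (\<lambda>\<psi>. restrict \<psi> T) ` copies R T eT"
    using finite_list[OF fin] by blast
  then have cs_copies: "set cs \<subseteq> copies R T eT" using restrict_in_copies by fastforce
  show ?thesis
  proof (cases "cs = []")
    case True
    then have "copies R T eT = {}" using cs by simp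
    moreover have "is_comb_line (length cs) 1 [None]" by (simp add: is_comb_line_def)
    ultimately show ?thesis
      using partite_hj_power[OF R T RT, of 1] line_embedding_in_pembeddings[OF cs_copies _ RT]
      unfolding partite_ramsey_def by blast
  next
    case False
    obtain N where N: "hales_jewett (length cs) k N"
      using hales_jewett_exists[of "length cs"] False by (cases cs) auto
    have "N \<ge> 1" using hales_jewett_pos[OF N \<open>k \<ge> 1\<close>] .
    then show ?thesis
      using partite_hj_power[OF R T RT] partite_ramsey_hj_power[OF cs_copies _ N _ RT] cs by blast
  qed
qed

section \<open>The partite construction\<close>

definition pstruc_over :: "'v pstruc \<Rightarrow> (nat \<times> nat) set \<Rightarrow> 'v pstruc" where
  "pstruc_over P T = P\<lparr>pverts := {x\<in>pverts P. proj P x \<in> T}\<rparr>"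

text \<open>The amalgam contains \<open>Q\<close> and, for every embedding \<open>\<phi>\<close> into \<open>Q\<close> of the part of \<open>P\<close>
  over \<open>T\<close>, one copy of \<open>P\<close> glued to \<open>Q\<close> along \<open>\<phi>\<close>; its vertex \<open>Inr (\<phi>, x)\<close> is the vertex
  \<open>x\<close> of \<open>P\<close> not over \<open>T\<close>.\<close>

fun amalgam_edge :: "'v pstruc \<Rightarrow> 'w pstruc \<Rightarrow> 'v set \<Rightarrow>
    'w + ('v \<Rightarrow> 'w) \<times> 'v \<Rightarrow> 'w + ('v \<Rightarrow> 'w) \<times> 'v \<Rightarrow> bool" where
  "amalgam_edge P Q V (Inl q) (Inl q') = pedge Q q q'"
| "amalgam_edge P Q V (Inl q) (Inr (\<phi>, x)) =
     (if q \<in> \<phi> ` V then \<exists>y\<in>V. \<phi> y = q \<and> pedge P y x else fst (proj Q q) < fst (proj P x))"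
| "amalgam_edge P Q V (Inr (\<phi>, x)) (Inl q) =
     (if q \<in> \<phi> ` V then \<exists>y\<in>V. \<phi> y = q \<and> pedge P x y else fst (proj P x) < fst (proj Q q))"
| "amalgam_edge P Q V (Inr (\<phi>, x)) (Inr (\<phi>', x')) =
     (if \<phi> = \<phi>' then pedge P x x' else fst (proj P x) < fst (proj P x'))"

definition amalgam :: "'v pstruc \<Rightarrow> 'w pstruc \<Rightarrow> (nat \<times> nat) set \<Rightarrow> ('w + ('v \<Rightarrow> 'w) \<times> 'v) pstruc" where
  "amalgam P Q T = \<lparr>
     pverts = Inl ` pverts Q \<union> {Inr (restrict \<phi> (pverts (pstruc_over P T)), x) | \<phi> x.
       \<phi> \<in> pembeddings (pstruc_over P T) Q \<and> x \<in> pverts P \<and> proj P x \<notin> T},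
     proj = case_sum (proj Q) (\<lambda>(\<phi>, x). proj P x),
     pedge = amalgam_edge P Q (pverts (pstruc_over P T))\<rparr>"

definition glue :: "'v pstruc \<Rightarrow> (nat \<times> nat) set \<Rightarrow> ('v \<Rightarrow> 'w) \<Rightarrow> 'v \<Rightarrow> 'w + ('v \<Rightarrow> 'w) \<times> 'v" where
  "glue P T \<phi> x = (if proj P x \<in> T then Inl (\<phi> x) else Inr (restrict \<phi> (pverts (pstruc_over P T)), x))"

lemma pstruc_over_simps [simp]:
  "pverts (pstruc_over P T) = {x\<in>pverts P. proj P x \<in> T}"
  "proj (pstruc_over P T) = proj P" "pedge (pstruc_over P T) = pedge P"
  by (simp_all add: pstruc_over_def)

lemma partite_pstruc_over: "partite n P \<Longrightarrow> partite n (pstruc_over P T)"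
  unfolding partite_def by auto

lemma pembeddingsD:
  assumes "\<Phi> \<in> pembeddings X Y"
  shows "inj_on \<Phi> (pverts X)" "x \<in> pverts X \<Longrightarrow> \<Phi> x \<in> pverts Y"
    "x \<in> pverts X \<Longrightarrow> proj Y (\<Phi> x) = proj X x"
    "x \<in> pverts X \<Longrightarrow> y \<in> pverts X \<Longrightarrow> pedge Y (\<Phi> x) (\<Phi> y) = pedge X x y"
  using assms unfolding pembeddings_def by auto

lemma restrict_in_pembeddings:
  "\<phi> \<in> pembeddings X Y \<Longrightarrow> restrict \<phi> (pverts X) \<in> pembeddings X Y"
  unfolding pembeddings_def by (auto simp: inj_on_def)

lemma unique_preimage:
  assumes "inj_on \<phi> V" "y0 \<in> V"
  shows "(\<exists>y\<in>V. \<phi> y = \<phi> y0 \<and> Pr y) \<longleftrightarrow> Pr y0"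
  using assms by (auto dest: inj_onD)

lemma amalgam_simps:
  "pverts (amalgam P Q T) = Inl ` pverts Q \<union> {Inr (restrict \<phi> (pverts (pstruc_over P T)), x) | \<phi> x.
       \<phi> \<in> pembeddings (pstruc_over P T) Q \<and> x \<in> pverts P \<and> proj P x \<notin> T}"
  "proj (amalgam P Q T) (Inl q) = proj Q q" "proj (amalgam P Q T) (Inr (\<phi>, x)) = proj P x"
  "pedge (amalgam P Q T) = amalgam_edge P Q (pverts (pstruc_over P T))"
  by (simp_all add: amalgam_def)

lemma finite_amalgam:
  assumes P: "finite (pverts P)" and Q: "finite (pverts Q)"
  shows "finite (pverts (amalgam P Q T))"
proof -
  define V where "V = pverts (pstruc_over P T)"
  define E where "E = (\<lambda>\<phi>. restrict \<phi> V) ` pembeddings (pstruc_over P T) Q"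
  have "E \<subseteq> PiE V (\<lambda>_. pverts Q)"
  proof
    fix \<psi> assume "\<psi> \<in> E"
    then obtain \<phi> where \<phi>: "\<phi> \<in> pembeddings (pstruc_over P T) Q" "\<psi> = restrict \<phi> V"
      unfolding E_def by blast
    show "\<psi> \<in> PiE V (\<lambda>_. pverts Q)"
      unfolding \<phi>(2) restrict_PiE_iff V_def using pembeddingsD(2)[OF \<phi>(1)] by blast
  qed
  then have "finite E"
    using finite_PiE[of V "\<lambda>_. pverts Q"] P Q unfolding V_def by (auto intro: finite_subset)
  then have "finite (Inr ` (E \<times> pverts P))" using P by blast
  then have "finite (Inl ` pverts Q \<union> Inr ` (E \<times> pverts P))" using Q by blast
  moreover have "pverts (amalgam P Q T) \<subseteq> Inl ` pverts Q \<union> Inr ` (E \<times> pverts P)"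
    unfolding amalgam_simps E_def V_def by blast
  ultimately show ?thesis by (rule finite_subset[rotated])
qed

lemma partite_pair_amalgam_glued:
  assumes P: "partite n P" and \<phi>: "\<phi> \<in> pembeddings (pstruc_over P T) Q" and x: "x \<in> pverts P"
  defines "V \<equiv> pverts (pstruc_over P T)"
  shows "partite_pair (fst (proj Q q)) (fst (proj P x))
    (amalgam_edge P Q V (Inl q) (Inr (\<phi>, x))) (amalgam_edge P Q V (Inr (\<phi>, x)) (Inl q))"
proof (cases "q \<in> \<phi> ` V")
  case True
  then obtain y where y: "y \<in> V" "q = \<phi> y" by blast
  have "proj Q q = proj P y" using pembeddingsD(3)[OF \<phi>] y unfolding V_def by simp
  then show ?thesis
    using partiteD(3)[OF P, of y x] y x True unique_preimage[OF pembeddingsD(1)[OF \<phi>]]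
    unfolding V_def by simp
qed (simp add: partite_pair_order)

lemma partite_amalgam:
  assumes P: "partite n P" and Q: "partite n Q"
  shows "partite n (amalgam P Q T)"
  unfolding partite_def
proof (intro conjI ballI)
  show "finite (pverts (amalgam P Q T))" using finite_amalgam partiteD(1)[OF P] partiteD(1)[OF Q] .
next
  fix u assume "u \<in> pverts (amalgam P Q T)"
  then show "fst (proj (amalgam P Q T) u) < n"
    using partiteD(2)[OF P] partiteD(2)[OF Q] by (auto simp: amalgam_simps)
next
  fix u v assume u: "u \<in> pverts (amalgam P Q T)" and v: "v \<in> pverts (amalgam P Q T)"
  define V where "V = pverts (pstruc_over P T)"
  have edge: "pedge (amalgam P Q T) = amalgam_edge P Q V" by (simp add: amalgam_simps V_def)
  have kind: "(\<exists>q\<in>pverts Q. w = Inl q) \<or>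
      (\<exists>\<phi>\<in>pembeddings (pstruc_over P T) Q. \<exists>x\<in>pverts P. w = Inr (restrict \<phi> V, x))"
    if "w \<in> pverts (amalgam P Q T)" for w
    using that unfolding amalgam_simps V_def by blast
  note glued = partite_pair_amalgam_glued[OF P restrict_in_pembeddings, folded V_def]
  show "partite_pair (fst (proj (amalgam P Q T) u)) (fst (proj (amalgam P Q T) v))
      (pedge (amalgam P Q T) u v) (pedge (amalgam P Q T) v u)"
  proof (cases "\<exists>q\<in>pverts Q. u = Inl q"; cases "\<exists>q\<in>pverts Q. v = Inl q")
    assume "\<exists>q\<in>pverts Q. u = Inl q" "\<exists>q\<in>pverts Q. v = Inl q"
    then show ?thesis using partiteD(3)[OF Q] by (auto simp: amalgam_simps edge)
  next
    assume "\<exists>q\<in>pverts Q. u = Inl q" "\<not> (\<exists>q\<in>pverts Q. v = Inl q)"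
    then show ?thesis
      using kind[OF v] glued by (auto simp: amalgam_simps V_def simp del: amalgam_edge.simps)
  next
    assume "\<not> (\<exists>q\<in>pverts Q. u = Inl q)" "\<exists>q\<in>pverts Q. v = Inl q"
    then show ?thesis using kind[OF u] glued[THEN iffD1[OF partite_pair_sym]]
      by (auto simp: amalgam_simps V_def simp del: amalgam_edge.simps)
  next
    assume "\<not> (\<exists>q\<in>pverts Q. u = Inl q)" "\<not> (\<exists>q\<in>pverts Q. v = Inl q)"
    then show ?thesis
      using kind[OF u] kind[OF v] partiteD(3)[OF P] partite_pair_order by (auto simp: amalgam_simps edge)
  qed
qed

lemma glue_in_pembeddings:
  assumes "\<phi> \<in> pembeddings (pstruc_over P T) Q"
  shows "glue P T \<phi> \<in> pembeddings P (amalgam P Q T)"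
proof -
  define V where "V = {x\<in>pverts P. proj P x \<in> T}"
  note \<phi> = pembeddingsD[OF assms, unfolded pstruc_over_simps V_def[symmetric]]
  have over: "x \<in> V \<longleftrightarrow> proj P x \<in> T" if "x \<in> pverts P" for x
    using that unfolding V_def by simp
  show ?thesis
    unfolding pembeddings_def
  proof (intro CollectI conjI ballI subsetI inj_onI)
    fix x y assume "x \<in> pverts P" "y \<in> pverts P" "glue P T \<phi> x = glue P T \<phi> y"
    then show "x = y"
      using over \<phi>(1) by (auto simp: glue_def split: if_splits dest: inj_onD)
  next
    fix u assume "u \<in> glue P T \<phi> ` pverts P"
    then show "u \<in> pverts (amalgam P Q T)"
      using over \<phi>(2) assms by (auto simp: glue_def amalgam_simps V_def)
  next
    fix x assume "x \<in> pverts P"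
    then show "proj (amalgam P Q T) (glue P T \<phi> x) = proj P x"
      using over \<phi>(3) by (auto simp: glue_def amalgam_simps)
  next
    fix x y assume x: "x \<in> pverts P" and y: "y \<in> pverts P"
    have uniq: "(\<exists>y'\<in>V. restrict \<phi> V y' = \<phi> y0 \<and> Pr y') \<longleftrightarrow> Pr y0" if "y0 \<in> V" for y0 Pr
      using \<phi>(1) that by (auto dest: inj_onD)
    have image: "\<phi> y0 \<in> restrict \<phi> V ` V" if "y0 \<in> V" for y0
      using that by (intro image_eqI[of _ _ y0]) auto
    show "pedge (amalgam P Q T) (glue P T \<phi> x) (glue P T \<phi> y) = pedge P x y"
      using over[OF x] over[OF y] \<phi>(4) uniq image
      by (cases "proj P x \<in> T"; cases "proj P y \<in> T") (simp_all add: glue_def amalgam_simps V_def[symmetric])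
  qed
qed

lemma partite_ramsey_amalgam:
  assumes "partite_ramsey k (pstruc_over P T) Q {(T, eT)}"
  shows "partite_ramsey k P (amalgam P Q T) {(T, eT)}"
  unfolding partite_ramsey_def
proof (intro allI impI)
  fix \<chi> assume "\<forall>(T', eT')\<in>{(T, eT)}. \<forall>\<psi>\<in>copies (amalgam P Q T) T' eT'. \<chi> (\<psi> ` T') < k"
  then have "\<chi> (Inl ` \<psi> ` T) < k" if "\<psi> \<in> copies Q T eT" for \<psi>
    using that by (force simp: copies_def amalgam_simps image_comp)
  then obtain \<phi> c where \<phi>: "\<phi> \<in> pembeddings (pstruc_over P T) Q"
    and mono: "\<forall>\<psi>\<in>copies (pstruc_over P T) T eT. \<chi> (Inl ` \<phi> ` \<psi> ` T) = c"
    using assms[unfolded partite_ramsey_def, THEN spec[of _ "\<lambda>S. \<chi> (Inl ` S)"]] by auto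
  have "\<chi> (glue P T \<phi> ` \<psi> ` T) = c" if "\<psi> \<in> copies P T eT" for \<psi>
  proof -
    have "glue P T \<phi> ` \<psi> ` T = Inl ` \<phi> ` \<psi> ` T"
      using that by (force simp: copies_def glue_def)
    moreover have "\<psi> \<in> copies (pstruc_over P T) T eT" using that by (simp add: copies_def)
    ultimately show ?thesis using mono by simp
  qed
  then show "\<exists>\<Phi>\<in>pembeddings P (amalgam P Q T). \<forall>(T', eT')\<in>{(T, eT)}.
      \<exists>c. \<forall>\<psi>\<in>copies P T' eT'. \<chi> (\<Phi> ` \<psi> ` T') = c"
    using glue_in_pembeddings[OF \<phi>] by blast
qed

theorem partite_ramsey_pattern:
  assumes T: "is_pattern T eT" and P: "partite n P" and "k \<ge> 1"
  shows "\<exists>P' :: nat pstruc. partite n P' \<and> partite_ramsey k P P' {(T, eT)}"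
proof -
  have "proj (pstruc_over P T) ` pverts (pstruc_over P T) \<subseteq> T" by auto
  then obtain N where N: "partite n (hj_power (pstruc_over P T) eT N)"
    "partite_ramsey k (pstruc_over P T) (hj_power (pstruc_over P T) eT N) {(T, eT)}"
    using partite_lemma[OF T partite_pstruc_over[OF P] _ \<open>k \<ge> 1\<close>] by blast
  define P' where "P' = amalgam P (hj_power (pstruc_over P T) eT N) T"
  have "partite n P'" using partite_amalgam[OF P N(1)] by (simp add: P'_def)
  moreover have "partite_ramsey k P P' {(T, eT)}"
    using partite_ramsey_amalgam[OF N(2)] by (simp add: P'_def)
  ultimately show ?thesis
    using partite_relabel partite_ramsey_relabel partiteD(1) by blast
qed

theorem partite_ramsey_patterns:
  assumes "finite \<T>" "\<forall>(T, eT)\<in>\<T>. is_pattern T eT" and P: "partite n P" and "k \<ge> 1"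
  shows "\<exists>P' :: nat pstruc. partite n P' \<and> partite_ramsey k P P' \<T>"
  using assms(1,2)
proof (induction rule: finite_induct)
  case empty
  show ?case
    using partite_relabel[OF P] partite_ramsey_empty[OF to_nat_on_in_pembeddings[OF partiteD(1)[OF P]]]
    by blast
next
  case (insert p \<T>)
  obtain T eT where p: "p = (T, eT)" by (cases p)
  obtain P1 :: "nat pstruc" where P1: "partite n P1" "partite_ramsey k P P1 \<T>"
    using insert by auto
  have "is_pattern T eT" using insert.prems p by simp
  then obtain P2 :: "nat pstruc" where "partite n P2" "partite_ramsey k P1 P2 {(T, eT)}"
    using partite_ramsey_pattern[OF _ P1(1) \<open>k \<ge> 1\<close>] by blast
  then show ?case using partite_ramsey_compose[OF P1(2)] p by (metis Un_insert_right sup_bot.right_neutral)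
qed

section \<open>The class \<open>Kstar n\<close>\<close>

definition part :: "struc \<Rightarrow> nat \<Rightarrow> nat" where
  "part X u = (LEAST i. u \<in> pred X i)"

definition rank :: "struc \<Rightarrow> nat \<Rightarrow> nat" where
  "rank X u = card {v\<in>univ X. less X v u}"

lemma KstarD:
  assumes "X \<in> Kstar n"
  shows "finite (univ X)" "complete_multipartite X"
    "\<forall>i<n. \<forall>j<n. i \<noteq> j \<longrightarrow> pred X i \<inter> pred X j = {}"
    "\<forall>x\<in>univ X. \<exists>i<n. part_of X x = pred X i"
    "\<forall>x\<in>univ X. \<not> less X x x"
    "\<forall>x\<in>univ X. \<forall>y\<in>univ X. \<forall>z\<in>univ X. less X x y \<longrightarrow> less X y z \<longrightarrow> less X x z"
    "\<forall>x\<in>univ X. \<forall>y\<in>univ X. x = y \<or> less X x y \<or> less X y x"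
    "\<forall>i<n. \<forall>j<n. i < j \<longrightarrow> (\<forall>x\<in>pred X i. \<forall>y\<in>pred X j. less X x y)"
proof -
  note K = assms[unfolded Kstar_def mem_Collect_eq]
  from K show "finite (univ X)" by (elim conjE)
  from K show "complete_multipartite X" by (elim conjE)
  from K show "\<forall>i<n. \<forall>j<n. i \<noteq> j \<longrightarrow> pred X i \<inter> pred X j = {}" by (elim conjE)
  from K show "\<forall>x\<in>univ X. \<exists>i<n. part_of X x = pred X i" by (elim conjE)
  from K show "\<forall>x\<in>univ X. \<not> less X x x" by (elim conjE)
  from K show "\<forall>x\<in>univ X. \<forall>y\<in>univ X. \<forall>z\<in>univ X. less X x y \<longrightarrow> less X y z \<longrightarrow> less X x z"
    by (elim conjE)
  from K show "\<forall>x\<in>univ X. \<forall>y\<in>univ X. x = y \<or> less X x y \<or> less X y x" by (elim conjE)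
  from K show "\<forall>i<n. \<forall>j<n. i < j \<longrightarrow> (\<forall>x\<in>pred X i. \<forall>y\<in>pred X j. less X x y)"
    by (elim conjE)
qed

lemma Kstar_part:
  assumes X: "X \<in> Kstar n" and u: "u \<in> univ X"
  shows "part X u < n" "u \<in> pred X (part X u)"
proof -
  obtain i where i: "i < n" "part_of X u = pred X i" using KstarD(4)[OF X] u by blast
  then have "u \<in> pred X i" using u by (auto simp: part_of_def)
  then show "u \<in> pred X (part X u)" unfolding part_def by (rule LeastI)
  show "part X u < n" using Least_le[of "\<lambda>i. u \<in> pred X i", OF \<open>u \<in> pred X i\<close>] i(1)
    unfolding part_def by linarith
qed

lemma Kstar_pred_iff:
  assumes X: "X \<in> Kstar n" and u: "u \<in> univ X" and "i < n"
  shows "u \<in> pred X i \<longleftrightarrow> i = part X u"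
  using KstarD(3)[OF X] \<open>i < n\<close> Kstar_part[OF X u] by blast

lemma Kstar_same_part_iff:
  assumes X: "X \<in> Kstar n" and u: "u \<in> univ X" and v: "v \<in> univ X"
  shows "part X u = part X v \<longleftrightarrow> u = v \<or> (\<not> edge X u v \<and> \<not> edge X v u)"
proof -
  obtain i where i: "i < n" "part_of X u = pred X i" using KstarD(4)[OF X] u by blast
  have "i = part X u" using i u Kstar_pred_iff[OF X u i(1)] by (auto simp: part_of_def)
  then have "v \<in> part_of X u \<longleftrightarrow> part X v = part X u"
    using i Kstar_pred_iff[OF X v i(1)] by auto
  then show ?thesis using v unfolding part_of_def by auto
qed

lemma Kstar_partite_pair:
  assumes X: "X \<in> Kstar n" and u: "u \<in> univ X" and v: "v \<in> univ X"
  shows "partite_pair (part X u) (part X v) (edge X u v) (edge X v u)"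
  using Kstar_same_part_iff[OF X u v] KstarD(2)[OF X] u v
  unfolding partite_pair_def complete_multipartite_def by blast

lemma Kstar_less_part:
  assumes X: "X \<in> Kstar n" and u: "u \<in> univ X" and v: "v \<in> univ X" and "less X u v"
  shows "part X u \<le> part X v"
proof (rule ccontr)
  assume "\<not> part X u \<le> part X v"
  then have "less X v u"
    using KstarD(8)[OF X] Kstar_part[OF X u] Kstar_part[OF X v] by (meson not_le)
  then show False using KstarD(5,6)[OF X] u v \<open>less X u v\<close> by blast
qed

lemma card_predecessors:
  fixes R :: "'a \<Rightarrow> 'a \<Rightarrow> bool"
  assumes fin: "finite V" and irrefl: "\<forall>x\<in>V. \<not> R x x"
    and trans: "\<forall>x\<in>V. \<forall>y\<in>V. \<forall>z\<in>V. R x y \<longrightarrow> R y z \<longrightarrow> R x z"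
    and total: "\<forall>x\<in>V. \<forall>y\<in>V. x = y \<or> R x y \<or> R y x"
  shows "bij_betw (\<lambda>x. card {u\<in>V. R u x}) V {..<card V}"
    "\<And>x y. x \<in> V \<Longrightarrow> y \<in> V \<Longrightarrow> R x y \<longleftrightarrow> card {u\<in>V. R u x} < card {u\<in>V. R u y}"
proof -
  define r where "r x = card {u\<in>V. R u x}" for x
  have less: "r x < r y" if "x \<in> V" "y \<in> V" "R x y" for x y
  proof -
    have "{u\<in>V. R u x} \<subset> {u\<in>V. R u y}" using trans irrefl that by blast
    then show ?thesis unfolding r_def using fin by (simp add: psubset_card_mono)
  qed
  have iff: "R x y \<longleftrightarrow> r x < r y" if "x \<in> V" "y \<in> V" for x y
    using less[OF that] less[OF that(2,1)] total that by fastforce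
  then show "R x y \<longleftrightarrow> card {u\<in>V. R u x} < card {u\<in>V. R u y}" if "x \<in> V" "y \<in> V" for x y
    using that unfolding r_def by blast
  have "inj_on r V" by (rule inj_onI) (metis iff less_irrefl total)
  moreover have "r ` V \<subseteq> {..<card V}"
  proof
    fix y assume "y \<in> r ` V"
    then obtain x where "x \<in> V" "y = r x" by blast
    moreover have "{u\<in>V. R u x} \<subset> V" using \<open>x \<in> V\<close> irrefl by blast
    ultimately show "y \<in> {..<card V}" unfolding r_def using fin by (simp add: psubset_card_mono)
  qed
  ultimately have "bij_betw r V {..<card V}"
    unfolding bij_betw_def using card_image card_subset_eq by (metis card_lessThan finite_lessThan)
  then show "bij_betw (\<lambda>x. card {u\<in>V. R u x}) V {..<card V}" unfolding r_def[abs_def] .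
qed

lemma Kstar_rank:
  assumes X: "X \<in> Kstar n"
  shows "bij_betw (rank X) (univ X) {..<card (univ X)}"
    "\<And>u v. u \<in> univ X \<Longrightarrow> v \<in> univ X \<Longrightarrow> less X u v \<longleftrightarrow> rank X u < rank X v"
proof -
  note card = card_predecessors[OF KstarD(1,5-7)[OF X]]
  show "bij_betw (rank X) (univ X) {..<card (univ X)}" unfolding rank_def[abs_def] by (rule card(1))
  show "less X u v \<longleftrightarrow> rank X u < rank X v" if "u \<in> univ X" "v \<in> univ X" for u v
    unfolding rank_def by (rule card(2)[OF that])
qed

text \<open>Pairs are ordered lexicographically (theory \<open>Product_Lexorder\<close>), so the vertices are
  ordered by part, then column, then name.\<close>

definition kstar_of :: "nat pstruc \<Rightarrow> struc" where
  "kstar_of P = \<lparr>univ = pverts P, edge = pedge P, pred = (\<lambda>i. {x\<in>pverts P. fst (proj P x) = i}),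
     less = (\<lambda>x y. (proj P x, x) < (proj P y, y))\<rparr>"

lemma kstar_of_simps [simp]:
  "univ (kstar_of P) = pverts P" "edge (kstar_of P) = pedge P"
  "pred (kstar_of P) i = {x\<in>pverts P. fst (proj P x) = i}"
  "less (kstar_of P) x y \<longleftrightarrow> (proj P x, x) < (proj P y, y)"
  by (simp_all add: kstar_of_def)

lemma partite_nonadjacent_iff:
  assumes "partite n P" "x \<in> pverts P" "y \<in> pverts P"
  shows "x = y \<or> (\<not> pedge P x y \<and> \<not> pedge P y x) \<longleftrightarrow> fst (proj P y) = fst (proj P x)"
  using partiteD(3)[OF assms] partiteD(3)[OF assms(1,2,2)] unfolding partite_pair_def by metis

lemma part_of_kstar_of:
  assumes "partite n P" "x \<in> pverts P"
  shows "part_of (kstar_of P) x = pred (kstar_of P) (fst (proj P x))"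
  using partite_nonadjacent_iff[OF assms] unfolding part_of_def by auto

lemma kstar_of_in_Kstar:
  assumes P: "partite n P"
  shows "kstar_of P \<in> Kstar n"
  unfolding Kstar_def
proof (intro CollectI conjI ballI allI impI)
  show "complete_multipartite (kstar_of P)"
    unfolding complete_multipartite_def kstar_of_simps
  proof (intro conjI ballI impI)
    fix x y z assume "x \<in> pverts P" "y \<in> pverts P" "z \<in> pverts P"
      "x = y \<or> (\<not> pedge P x y \<and> \<not> pedge P y x)" "y = z \<or> (\<not> pedge P y z \<and> \<not> pedge P z y)"
    then show "x = z \<or> (\<not> pedge P x z \<and> \<not> pedge P z x)"
      using partite_nonadjacent_iff[OF P] by metis
  qed (use partiteD(3)[OF P] in \<open>auto simp: partite_pair_def\<close>)
next
  fix i assume "i < n"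
  show "pred (kstar_of P) i = {} \<or> (\<exists>x\<in>univ (kstar_of P). pred (kstar_of P) i = part_of (kstar_of P) x)"
    using part_of_kstar_of[OF P] by fastforce
next
  fix x assume "x \<in> univ (kstar_of P)"
  then show "\<exists>i<n. part_of (kstar_of P) x = pred (kstar_of P) i"
    using part_of_kstar_of[OF P] partiteD(2)[OF P] by auto
next
  fix x y assume "x \<in> univ (kstar_of P)" "y \<in> univ (kstar_of P)"
  show "x = y \<or> less (kstar_of P) x y \<or> less (kstar_of P) y x"
    by (auto simp: neq_iff)
next
  fix x y z assume "less (kstar_of P) x y" "less (kstar_of P) y z"
  then show "less (kstar_of P) x z" by (auto intro: less_trans)
next
  fix i j x y assume "i < j" "x \<in> pred (kstar_of P) i" "y \<in> pred (kstar_of P) j"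
  then show "less (kstar_of P) x y" by (auto simp: less_prod_def)
qed (use partiteD(1)[OF P] in auto)

section \<open>Placing structures of \<open>Kstar n\<close> in partite structures\<close>

definition increasing :: "struc \<Rightarrow> (nat \<Rightarrow> nat) \<Rightarrow> bool" where
  "increasing X \<sigma> \<longleftrightarrow> (\<forall>u\<in>univ X. \<forall>v\<in>univ X. less X u v \<longrightarrow> \<sigma> u < \<sigma> v)"

definition place :: "struc \<Rightarrow> (nat \<Rightarrow> nat) \<Rightarrow> nat \<Rightarrow> nat \<times> nat" where
  "place X \<sigma> u = (part X u, \<sigma> u)"

definition placement :: "struc \<Rightarrow> 'v pstruc \<Rightarrow> (nat \<Rightarrow> 'v) \<Rightarrow> (nat \<Rightarrow> nat) \<Rightarrow> bool" where
  "placement X P y \<sigma> \<longleftrightarrow> increasing X \<sigma> \<and>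
     (\<forall>u\<in>univ X. y u \<in> pverts P \<and> proj P (y u) = place X \<sigma> u) \<and>
     (\<forall>u\<in>univ X. \<forall>v\<in>univ X. pedge P (y u) (y v) = edge X u v)"

definition kembedding :: "struc \<Rightarrow> struc \<Rightarrow> (nat \<Rightarrow> nat) \<Rightarrow> bool" where
  "kembedding A B \<theta> \<longleftrightarrow> \<theta> ` univ A \<subseteq> univ B \<and> (\<forall>u\<in>univ A. part B (\<theta> u) = part A u) \<and>
     (\<forall>u\<in>univ A. \<forall>v\<in>univ A. edge B (\<theta> u) (\<theta> v) = edge A u v \<and> (less A u v \<longrightarrow> less B (\<theta> u) (\<theta> v)))"

lemma increasing_inj:
  assumes "X \<in> Kstar n" "increasing X \<sigma>"
  shows "inj_on \<sigma> (univ X)"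
  using KstarD(7)[OF assms(1)] assms(2) unfolding increasing_def inj_on_def by (metis less_irrefl)

lemma inj_place: "X \<in> Kstar n \<Longrightarrow> increasing X \<sigma> \<Longrightarrow> inj_on (place X \<sigma>) (univ X)"
  using increasing_inj unfolding place_def inj_on_def by blast

lemma placement_inj:
  assumes "X \<in> Kstar n" "placement X P y \<sigma>"
  shows "inj_on y (univ X)"
  using inj_place[OF assms(1)] assms(2) unfolding placement_def inj_on_def by metis

lemma placement_less_iff:
  assumes X: "X \<in> Kstar n" and y: "placement X P y \<sigma>" and u: "u \<in> univ X" and v: "v \<in> univ X"
  shows "less (kstar_of P) (y u) (y v) \<longleftrightarrow> less X u v"
proof -
  have lex: "less (kstar_of P) (y u) (y v)" if "less X u v" "u \<in> univ X" "v \<in> univ X" for u v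
    using y Kstar_less_part[OF X that(2,3,1)] that
    unfolding placement_def increasing_def place_def by (auto simp: less_prod_def)
  show ?thesis
  proof
    assume "less (kstar_of P) (y u) (y v)"
    then have uv: "(proj P (y u), y u) < (proj P (y v), y v)" by simp
    then have "u \<noteq> v" by auto
    moreover have "\<not> less X v u"
    proof
      assume "less X v u"
      then have "(proj P (y v), y v) < (proj P (y u), y u)" using lex[OF _ v u] by simp
      then show False using less_not_sym[OF uv] by simp
    qed
    ultimately show "less X u v" using KstarD(7)[OF X] u v by blast
  qed (rule lex[OF _ u v])
qed

lemma placement_in_binom:
  assumes X: "X \<in> Kstar n" and y: "placement X P y \<sigma>"
  shows "y ` univ X \<in> binom n (kstar_of P) X"
proof -
  have "is_iso n X (induced (kstar_of P) (y ` univ X)) y"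
    unfolding is_iso_def
  proof (intro conjI ballI allI impI)
    show "bij_betw y (univ X) (univ (induced (kstar_of P) (y ` univ X)))"
      using placement_inj[OF X y] by (simp add: induced_def bij_betw_def)
  next
    fix u v assume "u \<in> univ X" "v \<in> univ X"
    then show "edge X u v = edge (induced (kstar_of P) (y ` univ X)) (y u) (y v)"
      "less X u v = less (induced (kstar_of P) (y ` univ X)) (y u) (y v)"
      using y placement_less_iff[OF X y] by (auto simp: induced_def placement_def)
  next
    fix i u assume "i < n" "u \<in> univ X"
    then show "u \<in> pred X i \<longleftrightarrow> y u \<in> pred (induced (kstar_of P) (y ` univ X)) i"
      using y Kstar_pred_iff[OF X] by (auto simp: induced_def placement_def place_def)
  qed
  moreover have "y ` univ X \<subseteq> pverts P" using y by (auto simp: placement_def)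
  ultimately show ?thesis unfolding binom_def isomorphic_def by auto
qed

lemma placement_pembedding:
  "placement X P y \<sigma> \<Longrightarrow> \<Phi> \<in> pembeddings P P' \<Longrightarrow> placement X P' (\<Phi> \<circ> y) \<sigma>"
  unfolding placement_def pembeddings_def by auto

lemma placement_kembedding:
  "placement B P y \<sigma> \<Longrightarrow> kembedding A B \<theta> \<Longrightarrow> placement A P (y \<circ> \<theta>) (\<sigma> \<circ> \<theta>)"
  unfolding placement_def kembedding_def increasing_def place_def by (auto simp: image_subset_iff)

lemma placement_cong:
  "placement X P y \<sigma> \<Longrightarrow> (\<And>u. u \<in> univ X \<Longrightarrow> \<sigma> u = \<sigma>' u) \<Longrightarrow> placement X P y \<sigma>'"
  unfolding placement_def increasing_def place_def by auto

lemma binom_placement_kembedding: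
  assumes A: "A \<in> Kstar n" and B: "B \<in> Kstar n" and y: "placement B P y \<sigma>"
    and S: "S \<in> binom n (induced (kstar_of P) (y ` univ B)) A"
  shows "\<exists>\<theta>. kembedding A B \<theta> \<and> S = y ` \<theta> ` univ A"
proof -
  obtain h where h: "is_iso n A (induced (induced (kstar_of P) (y ` univ B)) S) h"
    and "S \<subseteq> y ` univ B"
    using S unfolding binom_def isomorphic_def by (auto simp: induced_def)
  have hS: "h ` univ A = S" using h by (simp add: is_iso_def bij_betw_def induced_def)
  define \<theta> where "\<theta> u = inv_into (univ B) y (h u)" for u
  have \<theta>: "\<theta> u \<in> univ B" "y (\<theta> u) = h u" if "u \<in> univ A" for u
  proof -
    have "h u \<in> y ` univ B" using hS \<open>S \<subseteq> y ` univ B\<close> that by blast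
    then show "\<theta> u \<in> univ B" "y (\<theta> u) = h u"
      unfolding \<theta>_def by (rule inv_into_into, rule f_inv_into_f)
  qed
  have "kembedding A B \<theta>"
    unfolding kembedding_def
  proof (intro conjI ballI subsetI impI)
    fix u assume u: "u \<in> univ A"
    have "h u \<in> pred (kstar_of P) (part A u)"
      using h Kstar_part[OF A u] u unfolding is_iso_def by (auto simp: induced_def)
    then show "part B (\<theta> u) = part A u"
      using \<theta>[OF u] y unfolding placement_def place_def by auto
  next
    fix u v assume u: "u \<in> univ A" and v: "v \<in> univ A"
    have "edge B (\<theta> u) (\<theta> v) = pedge P (y (\<theta> u)) (y (\<theta> v))"
      using y \<theta>(1)[OF u] \<theta>(1)[OF v] unfolding placement_def by simp
    also have "\<dots> = edge A u v"
      using h \<theta>(2)[OF u] \<theta>(2)[OF v] u v unfolding is_iso_def by (simp add: induced_def)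
    finally show "edge B (\<theta> u) (\<theta> v) = edge A u v" .
    assume "less A u v"
    then have "less (kstar_of P) (y (\<theta> u)) (y (\<theta> v))"
      using h \<theta>[OF u] \<theta>[OF v] u v unfolding is_iso_def by (auto simp: induced_def)
    then show "less B (\<theta> u) (\<theta> v)" using placement_less_iff[OF B y \<theta>(1)[OF u] \<theta>(1)[OF v]] by blast
  qed (use \<theta> in auto)
  moreover have "S = y ` \<theta> ` univ A" using hS \<theta> by (auto simp: image_image)
  ultimately show ?thesis by blast
qed

definition pattern_positions :: "struc \<Rightarrow> (nat \<Rightarrow> nat) \<Rightarrow> (nat \<times> nat) set" where
  "pattern_positions X \<sigma> = place X \<sigma> ` univ X"

definition pattern_edge :: "struc \<Rightarrow> (nat \<Rightarrow> nat) \<Rightarrow> nat \<times> nat \<Rightarrow> nat \<times> nat \<Rightarrow> bool" where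
  "pattern_edge X \<sigma> d d' = edge X (inv_into (univ X) (place X \<sigma>) d) (inv_into (univ X) (place X \<sigma>) d')"

lemma pattern_edge_place:
  assumes "X \<in> Kstar n" "increasing X \<sigma>" "u \<in> univ X" "v \<in> univ X"
  shows "pattern_edge X \<sigma> (place X \<sigma> u) (place X \<sigma> v) = edge X u v"
  using inv_into_f_f[OF inj_place[OF assms(1,2)]] assms(3,4) by (simp add: pattern_edge_def)

lemma is_pattern_pattern:
  assumes X: "X \<in> Kstar n" and \<sigma>: "increasing X \<sigma>"
  shows "is_pattern (pattern_positions X \<sigma>) (pattern_edge X \<sigma>)"
  unfolding is_pattern_def pattern_positions_def
proof (intro conjI ballI)
  show "finite (place X \<sigma> ` univ X)" using KstarD(1)[OF X] by simp
next
  fix d d' assume "d \<in> place X \<sigma> ` univ X" "d' \<in> place X \<sigma> ` univ X"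
  then obtain u v where "u \<in> univ X" "v \<in> univ X" "d = place X \<sigma> u" "d' = place X \<sigma> v" by blast
  then show "partite_pair (fst d) (fst d') (pattern_edge X \<sigma> d d') (pattern_edge X \<sigma> d' d)"
    using Kstar_partite_pair[OF X] pattern_edge_place[OF X \<sigma>] by (simp add: place_def)
qed

lemma placement_copy:
  assumes X: "X \<in> Kstar n" and y: "placement X P y \<sigma>"
  shows "y \<circ> inv_into (univ X) (place X \<sigma>) \<in> copies P (pattern_positions X \<sigma>) (pattern_edge X \<sigma>)"
    "(y \<circ> inv_into (univ X) (place X \<sigma>)) ` pattern_positions X \<sigma> = y ` univ X"
proof -
  have \<sigma>: "increasing X \<sigma>" using y by (simp add: placement_def)
  note inv = inv_into_f_f[OF inj_place[OF X \<sigma>]]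
  show "y \<circ> inv_into (univ X) (place X \<sigma>) \<in> copies P (pattern_positions X \<sigma>) (pattern_edge X \<sigma>)"
    using y inv pattern_edge_place[OF X \<sigma>] by (auto simp: copies_def pattern_positions_def placement_def)
  show "(y \<circ> inv_into (univ X) (place X \<sigma>)) ` pattern_positions X \<sigma> = y ` univ X"
    using inv by (simp add: pattern_positions_def image_comp cong: image_cong)
qed

lemma copy_placement:
  assumes X: "X \<in> Kstar n" and \<sigma>: "increasing X \<sigma>"
    and \<psi>: "\<psi> \<in> copies P (pattern_positions X \<sigma>) (pattern_edge X \<sigma>)"
  shows "placement X P (\<psi> \<circ> place X \<sigma>) \<sigma>"
  using \<psi> \<sigma> pattern_edge_place[OF X \<sigma>]
  unfolding placement_def copies_def pattern_positions_def by auto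

definition placed_column :: "nat set \<Rightarrow> struc \<Rightarrow> nat \<Rightarrow> nat" where
  "placed_column S X u = sorted_list_of_set S ! rank X u"

lemma sorted_list_of_set_nth_less:
  "finite S \<Longrightarrow> i < j \<Longrightarrow> j < card S \<Longrightarrow> sorted_list_of_set S ! i < sorted_list_of_set S ! j"
  using sorted_wrt_nth_less[OF strict_sorted_list_of_set[of S]] by simp

lemma sorted_list_of_set_nth_card_less:
  fixes S :: "nat set"
  assumes "finite S" "x \<in> S"
  shows "sorted_list_of_set S ! card {y\<in>S. y < x} = x"
proof -
  define xs where "xs = sorted_list_of_set S"
  have xs: "set xs = S" "length xs = card S" "sorted_wrt (<) xs"
    using assms(1) by (simp_all add: xs_def)
  obtain i where i: "i < length xs" "xs ! i = x" using xs(1) assms(2) by (metis in_set_conv_nth)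
  have mono: "xs ! j < xs ! j' \<longleftrightarrow> j < j'" if "j < length xs" "j' < length xs" for j j'
    using sorted_wrt_nth_less[OF xs(3)] that by (metis less_asym linorder_neqE_nat)
  have "{y\<in>S. y < x} = (\<lambda>j. xs ! j) ` {..<i}"
  proof
    show "{y\<in>S. y < x} \<subseteq> (\<lambda>j. xs ! j) ` {..<i}"
    proof
      fix y assume "y \<in> {y\<in>S. y < x}"
      then obtain j where "j < length xs" "xs ! j = y" "y < x" using xs(1) by (auto simp: in_set_conv_nth)
      then show "y \<in> (\<lambda>j. xs ! j) ` {..<i}" using mono i by auto
    qed
    show "(\<lambda>j. xs ! j) ` {..<i} \<subseteq> {y\<in>S. y < x}" using mono i xs(1) by auto
  qed
  moreover have "inj_on (\<lambda>j. xs ! j) {..<i}"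
    using mono i by (intro inj_onI) (metis less_irrefl lessThan_iff order.strict_trans linorder_neqE_nat)
  ultimately show ?thesis using i by (simp add: card_image xs_def)
qed

lemma increasing_placed_column:
  assumes X: "X \<in> Kstar n" and "finite S" "card S = card (univ X)"
  shows "increasing X (placed_column S X)" "\<And>u. u \<in> univ X \<Longrightarrow> placed_column S X u \<in> S"
proof -
  have rank: "rank X u < card S" if "u \<in> univ X" for u
    using Kstar_rank(1)[OF X] that assms(3) by (auto dest: bij_betwE)
  show "increasing X (placed_column S X)"
    unfolding increasing_def placed_column_def
    using Kstar_rank(2)[OF X] rank sorted_list_of_set_nth_less[OF \<open>finite S\<close>] by blast
  show "placed_column S X u \<in> S" if "u \<in> univ X" for u
    using rank[OF that] \<open>finite S\<close> unfolding placed_column_def by (metis nth_mem set_sorted_list_of_set length_sorted_list_of_set)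
qed

lemma placed_column_image:
  assumes X: "X \<in> Kstar n" and g: "increasing X g" and u: "u \<in> univ X"
  shows "placed_column (g ` univ X) X u = g u"
proof -
  have less: "g v < g u \<longleftrightarrow> less X v u" if "v \<in> univ X" for v
    using g KstarD(5,7)[OF X] that u unfolding increasing_def by (metis less_asym less_irrefl)
  have "{y\<in>g ` univ X. y < g u} = g ` {v\<in>univ X. less X v u}" using less by auto
  then have "card {y\<in>g ` univ X. y < g u} = rank X u"
    using increasing_inj[OF X g] by (simp add: rank_def card_image inj_on_subset[of g "univ X"])
  then show ?thesis
    using sorted_list_of_set_nth_card_less[of "g ` univ X" "g u"] KstarD(1)[OF X] u
    by (simp add: placed_column_def)
qed

section \<open>Ramsey property of \<open>Kstar n\<close>\<close>

definition copies_on_subsets :: "struc \<Rightarrow> nat \<Rightarrow> (nat set \<times> nat) pstruc" where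
  "copies_on_subsets B M = \<lparr>pverts = nsets {..<M} (card (univ B)) \<times> univ B,
     proj = \<lambda>(H, u). place B (placed_column H B) u,
     pedge = \<lambda>(H, u) (H', u'). if H = H' then edge B u u' else part B u < part B u'\<rparr>"

lemma partite_copies_on_subsets:
  assumes B: "B \<in> Kstar n"
  shows "partite n (copies_on_subsets B M)"
  unfolding partite_def
proof (intro conjI ballI)
  show "finite (pverts (copies_on_subsets B M))"
    using KstarD(1)[OF B] finite_imp_finite_nsets[OF finite_lessThan] by (simp add: copies_on_subsets_def)
next
  fix x assume "x \<in> pverts (copies_on_subsets B M)"
  then show "fst (proj (copies_on_subsets B M) x) < n"
    using Kstar_part(1)[OF B] by (auto simp: copies_on_subsets_def place_def)
next
  fix x y assume "x \<in> pverts (copies_on_subsets B M)" "y \<in> pverts (copies_on_subsets B M)"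
  then obtain H u H' u' where xy: "x = (H, u)" "y = (H', u')" "u \<in> univ B" "u' \<in> univ B"
    by (auto simp: copies_on_subsets_def)
  then show "partite_pair (fst (proj (copies_on_subsets B M) x)) (fst (proj (copies_on_subsets B M) y))
      (pedge (copies_on_subsets B M) x y) (pedge (copies_on_subsets B M) y x)"
    using Kstar_partite_pair[OF B] partite_pair_order
    by (cases "H = H'") (auto simp: copies_on_subsets_def place_def)
qed

lemma placement_copies_on_subsets:
  assumes B: "B \<in> Kstar n" and H: "H \<in> nsets {..<M} (card (univ B))"
  shows "placement B (copies_on_subsets B M) (Pair H) (placed_column H B)"
  using increasing_placed_column(1)[OF B] H by (auto simp: placement_def copies_on_subsets_def nsets_def finite_subset)

lemma pattern_copy_in_copy_on_subset:
  assumes A: "A \<in> Kstar n" and B: "B \<in> Kstar n" and \<Phi>: "\<Phi> \<in> pembeddings (copies_on_subsets B M) P"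
    and H: "H \<in> nsets {..<M} (card (univ B))"
    and S': "S' \<in> binom n (induced (kstar_of P) ((\<Phi> \<circ> Pair H) ` univ B)) A"
  shows "\<exists>S\<in>nsets H (card (univ A)). \<exists>\<psi>\<in>copies (copies_on_subsets B M)
      (pattern_positions A (placed_column S A)) (pattern_edge A (placed_column S A)).
      S' = \<Phi> ` \<psi> ` pattern_positions A (placed_column S A)"
proof -
  note y = placement_copies_on_subsets[OF B H]
  obtain \<theta> where \<theta>: "kembedding A B \<theta>" "S' = (\<Phi> \<circ> Pair H) ` \<theta> ` univ A"
    using binom_placement_kembedding[OF A B placement_pembedding[OF y \<Phi>] S'] by blast
  define g where "g = placed_column H B \<circ> \<theta>"
  have yA: "placement A (copies_on_subsets B M) (Pair H \<circ> \<theta>) g"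
    unfolding g_def by (rule placement_kembedding[OF y \<theta>(1)])
  then have g: "increasing A g" by (simp add: placement_def)
  define S where "S = g ` univ A"
  have "S \<subseteq> H"
    using increasing_placed_column(2)[OF B] H \<theta>(1) by (auto simp: S_def g_def kembedding_def nsets_def finite_subset)
  moreover have "card S = card (univ A)"
    unfolding S_def using increasing_inj[OF A g] by (rule card_image)
  moreover have "finite S" using KstarD(1)[OF A] by (simp add: S_def)
  ultimately have S: "S \<in> nsets H (card (univ A))" by (simp add: nsets_def)
  have "placement A (copies_on_subsets B M) (Pair H \<circ> \<theta>) (placed_column S A)"
    using placement_cong[OF yA] placed_column_image[OF A g] unfolding S_def by metis
  note \<psi> = placement_copy[OF A this]
  have "S' = \<Phi> ` (Pair H \<circ> \<theta> \<circ> inv_into (univ A) (place A (placed_column S A))) `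
      pattern_positions A (placed_column S A)"
    unfolding \<psi>(2) \<theta>(2) by (simp add: image_comp)
  then show ?thesis using S \<psi>(1) by blast
qed

definition column_patterns ::
    "struc \<Rightarrow> nat \<Rightarrow> ((nat \<times> nat) set \<times> (nat \<times> nat \<Rightarrow> nat \<times> nat \<Rightarrow> bool)) set" where
  "column_patterns A M = (\<lambda>S. (pattern_positions A (placed_column S A), pattern_edge A (placed_column S A))) `
     nsets {..<M} (card (univ A))"

lemma finite_column_patterns: "finite (column_patterns A M)"
  by (simp add: column_patterns_def finite_imp_finite_nsets)

lemma column_patterns_are_patterns:
  "A \<in> Kstar n \<Longrightarrow> \<forall>(T, eT)\<in>column_patterns A M. is_pattern T eT"
  using is_pattern_pattern increasing_placed_column(1)
  by (auto simp: column_patterns_def nsets_def finite_subset)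

lemma column_pattern_copy_in_binom:
  assumes A: "A \<in> Kstar n" and S: "finite S" "card S = card (univ A)"
    and \<psi>: "\<psi> \<in> copies P (pattern_positions A (placed_column S A)) (pattern_edge A (placed_column S A))"
  shows "\<psi> ` pattern_positions A (placed_column S A) \<in> binom n (kstar_of P) A"
  using placement_in_binom[OF A copy_placement[OF A increasing_placed_column(1)[OF A S] \<psi>]]
  by (simp add: pattern_positions_def image_comp)

lemma constant_below:
  fixes f :: "'a \<Rightarrow> nat"
  assumes "\<forall>x\<in>X. f x < k" "\<exists>j. \<forall>x\<in>X. f x = j" "k \<ge> 1"
  shows "\<exists>j<k. \<forall>x\<in>X. f x = j"
proof (cases "X = {}")
  case True
  then show ?thesis using assms(3) by (intro exI[of _ 0]) simp
next
  case False
  then show ?thesis using assms(1,2) by fastforce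
qed

text \<open>The colouring of the copies of \<open>A\<close> induces a colouring of the column sets of size
  \<open>card (univ A)\<close>; a monochromatic column set of size \<open>card (univ B)\<close> provides the copy of \<open>B\<close>.\<close>

lemma kstar_of_arrows:
  assumes "k \<ge> 1" and A: "A \<in> Kstar n" and B: "B \<in> Kstar n"
    and M: "partn_lst {..<M} (replicate k (card (univ B))) (card (univ A))"
    and ramsey: "partite_ramsey k (copies_on_subsets B M) P (column_patterns A M)"
  shows "arrows n (kstar_of P) B A k"
  unfolding arrows_def
proof (intro allI impI)
  define T where "T S = pattern_positions A (placed_column S A)" for S
  define eT where "eT S = pattern_edge A (placed_column S A)" for S
  fix c :: "nat set \<Rightarrow> nat" assume c: "\<forall>S\<in>binom n (kstar_of P) A. c S < k"
  have copy_binom: "\<psi> ` T S \<in> binom n (kstar_of P) A"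
    if "S \<in> nsets {..<M} (card (univ A))" "\<psi> \<in> copies P (T S) (eT S)" for S \<psi>
  proof -
    have "finite S" "card S = card (univ A)"
      using that(1) by (auto simp: nsets_def intro: finite_subset)
    then show ?thesis
      using column_pattern_copy_in_binom[OF A _ _ that(2)[unfolded T_def eT_def]] by (simp add: T_def)
  qed
  then have "\<forall>(T', eT')\<in>column_patterns A M. \<forall>\<psi>\<in>copies P T' eT'. c (\<psi> ` T') < k"
    using c by (auto simp: column_patterns_def T_def eT_def)
  then obtain \<Phi> where \<Phi>: "\<Phi> \<in> pembeddings (copies_on_subsets B M) P"
    and mono: "\<forall>(T', eT')\<in>column_patterns A M.
      \<exists>j. \<forall>\<psi>\<in>copies (copies_on_subsets B M) T' eT'. c (\<Phi> ` \<psi> ` T') = j"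
    using ramsey unfolding partite_ramsey_def by blast
  have "\<forall>S\<in>nsets {..<M} (card (univ A)).
      \<exists>j<k. \<forall>\<psi>\<in>copies (copies_on_subsets B M) (T S) (eT S). c (\<Phi> ` \<psi> ` T S) = j"
  proof
    fix S assume S: "S \<in> nsets {..<M} (card (univ A))"
    have "\<forall>\<psi>\<in>copies (copies_on_subsets B M) (T S) (eT S). c (\<Phi> ` \<psi> ` T S) < k"
      using c copy_binom[OF S pembeddings_copies[OF \<Phi>]] by (simp add: image_comp)
    moreover have "\<exists>j. \<forall>\<psi>\<in>copies (copies_on_subsets B M) (T S) (eT S). c (\<Phi> ` \<psi> ` T S) = j"
      using bspec[OF mono, of "(T S, eT S)"] S by (simp add: column_patterns_def T_def eT_def)
    ultimately show "\<exists>j<k. \<forall>\<psi>\<in>copies (copies_on_subsets B M) (T S) (eT S). c (\<Phi> ` \<psi> ` T S) = j"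
      by (rule constant_below[OF _ _ \<open>k \<ge> 1\<close>])
  qed
  then obtain colour where colour: "\<forall>S\<in>nsets {..<M} (card (univ A)). colour S < k \<and>
      (\<forall>\<psi>\<in>copies (copies_on_subsets B M) (T S) (eT S). c (\<Phi> ` \<psi> ` T S) = colour S)"
    by (metis bchoice)
  have "colour \<in> nsets {..<M} (card (univ A)) \<rightarrow> {..<length (replicate k (card (univ B)))}"
    using colour by simp
  then obtain i H where H: "H \<in> nsets {..<M} (card (univ B))"
    and H_mono: "colour ` nsets H (card (univ A)) \<subseteq> {i}"
    using M unfolding partn_lst_def monochromatic_def by force
  have H_sub: "nsets H (card (univ A)) \<subseteq> nsets {..<M} (card (univ A))"
    using H by (auto simp: nsets_def)
  show "\<exists>B'\<in>binom n (kstar_of P) B. \<exists>j. \<forall>S\<in>binom n (induced (kstar_of P) B') A. c S = j"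
  proof (intro bexI exI ballI)
    show "(\<Phi> \<circ> Pair H) ` univ B \<in> binom n (kstar_of P) B"
      by (rule placement_in_binom[OF B placement_pembedding[OF placement_copies_on_subsets[OF B H] \<Phi>]])
    fix S' assume "S' \<in> binom n (induced (kstar_of P) ((\<Phi> \<circ> Pair H) ` univ B)) A"
    then obtain S \<psi> where "S \<in> nsets H (card (univ A))"
      and "\<psi> \<in> copies (copies_on_subsets B M) (T S) (eT S)" and "S' = \<Phi> ` \<psi> ` T S"
      using pattern_copy_in_copy_on_subset[OF A B \<Phi> H] unfolding T_def eT_def by blast
    then show "c S' = i" using colour H_mono H_sub by fastforce
  qed
qed

theorem theorem8p3:
  fixes n :: nat
  assumes "n \<ge> 1"
  shows "ramsey_property n (Kstar n)"
  unfolding ramsey_property_def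
proof (intro allI impI ballI)
  fix k :: nat and A B assume "k \<ge> 1" and A: "A \<in> Kstar n" and B: "B \<in> Kstar n"
  obtain M :: nat where M: "partn_lst {..<M} (replicate k (card (univ B))) (card (univ A))"
    using ramsey_full by blast
  obtain P :: "nat pstruc" where P: "partite n P"
    and ramsey: "partite_ramsey k (copies_on_subsets B M) P (column_patterns A M)"
    using partite_ramsey_patterns[OF finite_column_patterns column_patterns_are_patterns[OF A]
        partite_copies_on_subsets[OF B] \<open>k \<ge> 1\<close>]
    by blast
  have "arrows n (kstar_of P) B A k" by (rule kstar_of_arrows[OF \<open>k \<ge> 1\<close> A B M ramsey])
  then show "\<exists>C\<in>Kstar n. arrows n C B A k" using kstar_of_in_Kstar[OF P] by blast
qed

end
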